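(* Let $P$ be a continuous poset and $M$ a persistence module over $P$. Then $\underline{\underline M}\cong\underline M$, $\overline{\overline M}\cong\overline M$, $\underline{(\overline M)}\cong\underline M$ and $\overline{(\underline M)}\cong\overline M$. In particular $\underline M$ is upper semi-continuous and $\overline M$ is lower semi-continuous.
   Context: Let $P$ be a poset. A subset is directed if nonempty and any two elements have an upper bound in it. $x\ll y$ ($x$ way below $y$) means: for every directed $D$ whose supremum exists with $y\le\sup D$, some $d\in D$ satisfies $x\le d$. $P$ is continuous if for each $p$ the set $\{x:x\ll p\}$ is directed with supremum $p$. $k$ is a commutative ring with unity; a persistence module over $P$ is a functor $M$ from $P$ (as a category, $p\to q$ iff $p\le q$) to $k$-modules, with modules $M_p$ and internal maps $M(p\le q)$. Define persistence modules $\underline M_p=\varprojlim_{x\gg p}M_x$ and $\overline M_p=\varinjlim_{x\ll p}M_x$ (internal maps induced by universal properties); there are canonical morphisms $M\to\underline M$ and $\overline M\to M$. $M$ is upper semi-continuous if $M\to\underline M$ is an isomorphism, and lower semi-continuous if $\overline M\to M$ is an isomorphism. *)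

theory Defs
  imports Main "HOL-Algebra.Module"
begin

text \<open>The poset P is the ambient type 'p with its partial order (class order).\<close>

definition directed :: "'p::order set \<Rightarrow> bool" where
  "directed D \<longleftrightarrow> D \<noteq> {} \<and> (\<forall>a\<in>D. \<forall>b\<in>D. \<exists>c\<in>D. a \<le> c \<and> b \<le> c)"

definition is_sup :: "'p::order set \<Rightarrow> 'p \<Rightarrow> bool" where
  "is_sup D s \<longleftrightarrow> (\<forall>d\<in>D. d \<le> s) \<and> (\<forall>u. (\<forall>d\<in>D. d \<le> u) \<longrightarrow> s \<le> u)"

definition way_below :: "'p::order \<Rightarrow> 'p \<Rightarrow> bool" (infix \<open>\<lless>\<close> 50) where
  "x \<lless> y \<longleftrightarrow> (\<forall>D s. directed D \<longrightarrow> is_sup D s \<longrightarrow> y \<le> s \<longrightarrow> (\<exists>d\<in>D. x \<le> d))"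

definition continuous_poset :: "'p::order itself \<Rightarrow> bool" where
  "continuous_poset TYPE('p) \<longleftrightarrow>
     (\<forall>p::'p. directed {x. x \<lless> p} \<and> is_sup {x. x \<lless> p} p)"

text \<open>A persistence module over 'p with values in modules over the commutative ring R:
  a family of modules (all with carriers in a common type 'm) together with internal maps.\<close>

type_synonym ('p, 'k, 'm) pmod = "('p \<Rightarrow> ('k, 'm) module) \<times> ('p \<Rightarrow> 'p \<Rightarrow> 'm \<Rightarrow> 'm)"

definition mod_hom :: "('k, 'c) ring_scheme \<Rightarrow> ('k, 'm) module \<Rightarrow> ('k, 'n) module \<Rightarrow> ('m \<Rightarrow> 'n) \<Rightarrow> bool" where
  "mod_hom R A B f \<longleftrightarrow>
     (\<forall>a\<in>carrier A. f a \<in> carrier B) \<and>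
     (\<forall>a\<in>carrier A. \<forall>b\<in>carrier A. f (a \<oplus>\<^bsub>A\<^esub> b) = f a \<oplus>\<^bsub>B\<^esub> f b) \<and>
     (\<forall>r\<in>carrier R. \<forall>a\<in>carrier A. f (r \<odot>\<^bsub>A\<^esub> a) = r \<odot>\<^bsub>B\<^esub> f a)"

definition pers_mod :: "('k, 'c) ring_scheme \<Rightarrow> ('p::order, 'k, 'm) pmod \<Rightarrow> bool" where
  "pers_mod R M \<longleftrightarrow>
     (\<forall>p. module R (fst M p)) \<and>
     (\<forall>p q. p \<le> q \<longrightarrow> mod_hom R (fst M p) (fst M q) (snd M p q)) \<and>
     (\<forall>p. \<forall>a\<in>carrier (fst M p). snd M p p a = a) \<and>
     (\<forall>p q r. p \<le> q \<longrightarrow> q \<le> r \<longrightarrow>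
        (\<forall>a\<in>carrier (fst M p). snd M q r (snd M p q a) = snd M p r a))"

definition is_pm_iso :: "('k, 'c) ring_scheme \<Rightarrow> ('p::order, 'k, 'm) pmod \<Rightarrow> ('p, 'k, 'n) pmod
    \<Rightarrow> ('p \<Rightarrow> 'm \<Rightarrow> 'n) \<Rightarrow> bool" where
  "is_pm_iso R A B eta \<longleftrightarrow>
     (\<forall>p. mod_hom R (fst A p) (fst B p) (eta p) \<and>
          bij_betw (eta p) (carrier (fst A p)) (carrier (fst B p))) \<and>
     (\<forall>p q. p \<le> q \<longrightarrow> (\<forall>a\<in>carrier (fst A p). eta q (snd A p q a) = snd B p q (eta p a)))"

definition pm_isomorphic :: "('k, 'c) ring_scheme \<Rightarrow> ('p::order, 'k, 'm) pmod \<Rightarrow> ('p, 'k, 'n) pmod \<Rightarrow> bool" where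
  "pm_isomorphic R A B \<longleftrightarrow> (\<exists>eta. is_pm_iso R A B eta)"

text \<open>Inverse limit of the diagram M restricted to the full subposet I: compatible families,
  with pointwise operations (entries outside I are fixed to undefined).\<close>
definition inv_lim :: "('p::order, 'k, 'm) pmod \<Rightarrow> 'p set \<Rightarrow> ('k, 'p \<Rightarrow> 'm) module" where
  "inv_lim M I =
    \<lparr> carrier = {f. (\<forall>x\<in>I. f x \<in> carrier (fst M x)) \<and> (\<forall>x. x \<notin> I \<longrightarrow> f x = undefined) \<and>
                   (\<forall>x\<in>I. \<forall>y\<in>I. x \<le> y \<longrightarrow> snd M x y (f x) = f y)},
      monoid.mult = (\<lambda>f g. undefined), one = undefined,
      zero = (\<lambda>x. if x \<in> I then \<zero>\<^bsub>fst M x\<^esub> else undefined),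
      add = (\<lambda>f g x. if x \<in> I then f x \<oplus>\<^bsub>fst M x\<^esub> g x else undefined),
      smult = (\<lambda>r f x. if x \<in> I then r \<odot>\<^bsub>fst M x\<^esub> f x else undefined) \<rparr>"

definition upper :: "('p::order, 'k, 'm) pmod \<Rightarrow> ('p, 'k, 'p \<Rightarrow> 'm) pmod" where
  "upper M = (\<lambda>p. inv_lim M {x. p \<lless> x},
              \<lambda>p q f x. if q \<lless> x then f x else undefined)"

definition upper_unit :: "('p::order, 'k, 'm) pmod \<Rightarrow> 'p \<Rightarrow> 'm \<Rightarrow> ('p \<Rightarrow> 'm)" where
  "upper_unit M p a = (\<lambda>x. if p \<lless> x then snd M p x a else undefined)"

definition dsum :: "('p::order, 'k, 'm) pmod \<Rightarrow> 'p set \<Rightarrow> ('k, 'p \<Rightarrow> 'm) module" where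
  "dsum M J =
    \<lparr> carrier = {f. (\<forall>x\<in>J. f x \<in> carrier (fst M x)) \<and> (\<forall>x. x \<notin> J \<longrightarrow> f x = undefined) \<and>
                   finite {x\<in>J. f x \<noteq> \<zero>\<^bsub>fst M x\<^esub>}},
      monoid.mult = (\<lambda>f g. undefined), one = undefined,
      zero = (\<lambda>x. if x \<in> J then \<zero>\<^bsub>fst M x\<^esub> else undefined),
      add = (\<lambda>f g x. if x \<in> J then f x \<oplus>\<^bsub>fst M x\<^esub> g x else undefined),
      smult = (\<lambda>r f x. if x \<in> J then r \<odot>\<^bsub>fst M x\<^esub> f x else undefined) \<rparr>"

definition dsum_ins :: "('p::order, 'k, 'm) pmod \<Rightarrow> 'p set \<Rightarrow> 'p \<Rightarrow> 'm \<Rightarrow> ('p \<Rightarrow> 'm)" where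
  "dsum_ins M J x a = (\<lambda>y. if y = x then a else if y \<in> J then \<zero>\<^bsub>fst M y\<^esub> else undefined)"

definition dlim_rel :: "('k, 'c) ring_scheme \<Rightarrow> ('p::order, 'k, 'm) pmod \<Rightarrow> 'p set \<Rightarrow> ('p \<Rightarrow> 'm) set" where
  "dlim_rel R M J =
     \<Inter> {N. submodule N R (dsum M J) \<and>
            {dsum_ins M J x a \<ominus>\<^bsub>dsum M J\<^esub> dsum_ins M J y (snd M x y a) | x y a.
               x \<in> J \<and> y \<in> J \<and> x \<le> y \<and> a \<in> carrier (fst M x)} \<subseteq> N}"

definition dlim_cls :: "('k, 'c) ring_scheme \<Rightarrow> ('p::order, 'k, 'm) pmod \<Rightarrow> 'p set \<Rightarrow> ('p \<Rightarrow> 'm) \<Rightarrow> ('p \<Rightarrow> 'm) set" where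
  "dlim_cls R M J f = {g \<in> carrier (dsum M J). g \<ominus>\<^bsub>dsum M J\<^esub> f \<in> dlim_rel R M J}"

definition rep :: "'a set \<Rightarrow> 'a" where
  "rep A = (SOME f. f \<in> A)"

definition dir_lim :: "('k, 'c) ring_scheme \<Rightarrow> ('p::order, 'k, 'm) pmod \<Rightarrow> 'p set \<Rightarrow> ('k, ('p \<Rightarrow> 'm) set) module" where
  "dir_lim R M J =
    \<lparr> carrier = dlim_cls R M J ` carrier (dsum M J),
      monoid.mult = (\<lambda>A B. undefined), one = undefined,
      zero = dlim_cls R M J \<zero>\<^bsub>dsum M J\<^esub>,
      add = (\<lambda>A B. dlim_cls R M J (rep A \<oplus>\<^bsub>dsum M J\<^esub> rep B)),
      smult = (\<lambda>r A. dlim_cls R M J (r \<odot>\<^bsub>dsum M J\<^esub> rep A)) \<rparr>"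

definition lower :: "('k, 'c) ring_scheme \<Rightarrow> ('p::order, 'k, 'm) pmod \<Rightarrow> ('p, 'k, ('p \<Rightarrow> 'm) set) pmod" where
  "lower R M = (\<lambda>p. dir_lim R M {x. x \<lless> p},
                \<lambda>p q A. dlim_cls R M {x. x \<lless> q}
                   (\<lambda>x. if x \<lless> p then rep A x else if x \<lless> q then \<zero>\<^bsub>fst M x\<^esub> else undefined))"

definition lower_counit :: "('k, 'c) ring_scheme \<Rightarrow> ('p::order, 'k, 'm) pmod \<Rightarrow> 'p \<Rightarrow> ('p \<Rightarrow> 'm) set \<Rightarrow> 'm" where
  "lower_counit R M p A =
     finsum (fst M p) (\<lambda>x. snd M x p (rep A x)) {x. x \<lless> p \<and> rep A x \<noteq> \<zero>\<^bsub>fst M x\<^esub>}"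

definition upper_semicont :: "('k, 'c) ring_scheme \<Rightarrow> ('p::order, 'k, 'm) pmod \<Rightarrow> bool" where
  "upper_semicont R M \<longleftrightarrow> is_pm_iso R M (upper M) (upper_unit M)"

definition lower_semicont :: "('k, 'c) ring_scheme \<Rightarrow> ('p::order, 'k, 'm) pmod \<Rightarrow> bool" where
  "lower_semicont R M \<longleftrightarrow> is_pm_iso R (lower R M) M (lower_counit R M)"

end

theory Submission
  imports Defs
begin

text \<open>
  By interpolation (\<open>x \<lless> y\<close> gives some \<open>z\<close> with \<open>x \<lless> z \<lless> y\<close>), the index sets \<open>{x. p \<lless> x}\<close>
  and \<open>{x. x \<lless> p}\<close> of the limit \<open>upper M\<close> and the colimit \<open>lower M\<close> have no extremal elements
  for \<open>\<lless>\<close>. Hence a morphism \<open>\<phi> : A \<rightarrow> B\<close> that is invertible up to way-below, i.e. that has maps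
  \<open>\<psi>\<^sub>x\<^sub>y : B\<^sub>x \<rightarrow> A\<^sub>y\<close> for \<open>x \<lless> y\<close> with \<open>\<psi>\<^sub>x\<^sub>y \<circ> \<phi>\<^sub>x = A(x \<le> y)\<close> and
  \<open>\<phi>\<^sub>y \<circ> \<psi>\<^sub>x\<^sub>y = B(x \<le> y)\<close>, induces isomorphisms \<open>upper A \<cong> upper B\<close> and
  \<open>lower A \<cong> lower B\<close>. The unit \<open>M \<rightarrow> upper M\<close>, with \<open>\<psi>\<^sub>x\<^sub>y\<close> evaluating a compatible family
  at \<open>y\<close>, and the counit \<open>lower M \<rightarrow> M\<close>, with \<open>\<psi>\<^sub>x\<^sub>y\<close> the inclusion of \<open>M\<^sub>x\<close> into the colimit
  at \<open>y\<close>, are such morphisms; this gives the four isomorphisms. The canonical morphisms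
  \<open>upper M \<rightarrow> upper (upper M)\<close> and \<open>lower (lower M) \<rightarrow> lower M\<close> coincide with the induced
  isomorphisms, which is the semi-continuity.
\<close>

section \<open>The way-below relation\<close>

lemma way_below_imp_le: "x \<lless> y \<Longrightarrow> x \<le> (y::'p::order)"
proof -
  assume "x \<lless> y"
  moreover have "directed {y}" by (simp add: directed_def)
  moreover have "is_sup {y} y" by (simp add: is_sup_def)
  ultimately show ?thesis unfolding way_below_def by blast
qed

lemma way_below_le_trans: "x \<lless> y \<Longrightarrow> y \<le> z \<Longrightarrow> x \<lless> (z::'p::order)"
  unfolding way_below_def by (meson order_trans)

lemma le_way_below_trans: "x \<le> y \<Longrightarrow> y \<lless> z \<Longrightarrow> x \<lless> (z::'p::order)"
  unfolding way_below_def by (meson order_trans)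

lemma way_below_trans: "x \<lless> y \<Longrightarrow> y \<lless> z \<Longrightarrow> x \<lless> (z::'p::order)"
  using way_below_imp_le le_way_below_trans by blast

lemma directed_finite_upper_bound:
  assumes "directed J" "finite S" "S \<subseteq> J"
  shows "\<exists>z\<in>J. \<forall>x\<in>S. x \<le> z"
  using assms(2,3)
proof (induction S rule: finite_induct)
  case empty then show ?case using assms(1) unfolding directed_def by blast
next
  case (insert x F)
  then obtain z where "z \<in> J" "\<forall>y\<in>F. y \<le> z" by blast
  moreover obtain c where "c \<in> J" "x \<le> c" "z \<le> c"
    using assms(1) insert.prems \<open>z \<in> J\<close> unfolding directed_def by blast
  ultimately show ?case using order_trans by blast
qed

context
  assumes cont: "continuous_poset TYPE('p::order)"
begin

lemma directed_way_below: "directed {x::'p. x \<lless> p}"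
  using cont unfolding continuous_poset_def by blast

lemma is_sup_way_below: "is_sup {x::'p. x \<lless> p} p"
  using cont unfolding continuous_poset_def by blast

lemma way_below_upper_bound: "x \<lless> p \<Longrightarrow> y \<lless> p \<Longrightarrow> \<exists>z. z \<lless> p \<and> x \<le> z \<and> y \<le> (z::'p)"
  using directed_way_below[of p] unfolding directed_def by blast

lemma way_below_interpolation:
  assumes "x \<lless> (y::'p)"
  shows "\<exists>z. x \<lless> z \<and> z \<lless> y"
proof -
  define D where "D = {w::'p. \<exists>z. w \<lless> z \<and> z \<lless> y}"
  have "directed D" unfolding directed_def
  proof (intro conjI ballI)
    obtain z w where "z \<lless> y" "w \<lless> z"
      using directed_way_below unfolding directed_def by blast
    then show "D \<noteq> {}" unfolding D_def by blast
  next
    fix a b assume "a \<in> D" "b \<in> D"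
    then obtain z1 z2 where 1: "a \<lless> z1" "z1 \<lless> y" and 2: "b \<lless> z2" "z2 \<lless> y"
      unfolding D_def by blast
    obtain z3 where z3: "z3 \<lless> y" "z1 \<le> z3" "z2 \<le> z3"
      using way_below_upper_bound[OF 1(2) 2(2)] by blast
    have "a \<lless> z3" "b \<lless> z3" using 1 2 z3 way_below_le_trans by blast+
    then obtain w where "w \<lless> z3" "a \<le> w" "b \<le> w" using way_below_upper_bound by blast
    with z3 show "\<exists>c\<in>D. a \<le> c \<and> b \<le> c" unfolding D_def by blast
  qed
  moreover have "is_sup D y" unfolding is_sup_def
  proof (intro conjI allI impI ballI)
    fix d assume "d \<in> D"
    then show "d \<le> y" unfolding D_def using way_below_imp_le order_trans by blast
  next
    fix u assume u: "\<forall>d\<in>D. d \<le> u"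
    have "z \<le> u" if "z \<lless> y" for z
    proof -
      have "\<forall>w\<in>{x. x \<lless> z}. w \<le> u" using u that unfolding D_def by blast
      then show "z \<le> u" using is_sup_way_below[of z] unfolding is_sup_def by blast
    qed
    then show "y \<le> u" using is_sup_way_below[of y] unfolding is_sup_def by blast
  qed
  ultimately obtain d where "d \<in> D" "x \<le> d" using assms unfolding way_below_def by blast
  then show ?thesis unfolding D_def using le_way_below_trans by blast
qed

lemma way_below_interpolation2:
  assumes "x1 \<lless> (y::'p)" "x2 \<lless> y"
  shows "\<exists>z. x1 \<lless> z \<and> x2 \<lless> z \<and> z \<lless> y"
proof -
  obtain w1 w2 where "x1 \<lless> w1" "w1 \<lless> y" "x2 \<lless> w2" "w2 \<lless> y"
    using way_below_interpolation assms by blast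
  moreover then obtain z where "z \<lless> y" "w1 \<le> z" "w2 \<le> z" using way_below_upper_bound by blast
  ultimately show ?thesis using way_below_le_trans by blast
qed

end

context abelian_group
begin

lemma minus_self: "a \<in> carrier G \<Longrightarrow> a \<ominus> a = \<zero>"
  by (simp add: minus_eq r_neg)

lemma minus_add_minus: "a \<in> carrier G \<Longrightarrow> b \<in> carrier G \<Longrightarrow> c \<in> carrier G \<Longrightarrow> (a \<ominus> b) \<oplus> (b \<ominus> c) = a \<ominus> c"
  by (simp add: minus_eq a_assoc[symmetric]) (simp add: a_assoc l_neg)

lemma a_inv_minus: "a \<in> carrier G \<Longrightarrow> b \<in> carrier G \<Longrightarrow> \<ominus> (a \<ominus> b) = b \<ominus> a"
  by (simp add: minus_eq minus_add a_comm)

lemma add_minus_add: "a \<in> carrier G \<Longrightarrow> b \<in> carrier G \<Longrightarrow> c \<in> carrier G \<Longrightarrow> d \<in> carrier G \<Longrightarrow>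
   (a \<oplus> b) \<ominus> (c \<oplus> d) = (a \<ominus> c) \<oplus> (b \<ominus> d)"
  by (simp add: minus_eq minus_add a_ac)

lemma minus_zero_right: "a \<in> carrier G \<Longrightarrow> a \<ominus> \<zero> = a"
  by (simp add: minus_eq)

lemma minus_eq_zero_iff: "a \<in> carrier G \<Longrightarrow> b \<in> carrier G \<Longrightarrow> a \<ominus> b = \<zero> \<longleftrightarrow> a = b"
  by (metis minus_self add.inv_solve_right minus_eq zero_closed)

end

lemma (in module) smult_minus_distr: "r \<in> carrier R \<Longrightarrow> a \<in> carrier M \<Longrightarrow> b \<in> carrier M \<Longrightarrow>
   r \<odot>\<^bsub>M\<^esub> a \<ominus>\<^bsub>M\<^esub> r \<odot>\<^bsub>M\<^esub> b = r \<odot>\<^bsub>M\<^esub> (a \<ominus>\<^bsub>M\<^esub> b)"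
  by (simp add: M.minus_eq smult_r_distr smult_r_minus)

lemma (in module) submodule_closed:
  assumes "submodule S R M"
  shows "S \<subseteq> carrier M" "\<zero>\<^bsub>M\<^esub> \<in> S" "\<And>a. a \<in> S \<Longrightarrow> \<ominus>\<^bsub>M\<^esub> a \<in> S"
    "\<And>a b. a \<in> S \<Longrightarrow> b \<in> S \<Longrightarrow> a \<oplus>\<^bsub>M\<^esub> b \<in> S"
    "\<And>r a. r \<in> carrier R \<Longrightarrow> a \<in> S \<Longrightarrow> r \<odot>\<^bsub>M\<^esub> a \<in> S"
    "\<And>a b. a \<in> S \<Longrightarrow> b \<in> S \<Longrightarrow> a \<ominus>\<^bsub>M\<^esub> b \<in> S"
proof -
  show "S \<subseteq> carrier M" using submoduleE(1)[OF assms] .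
  show "\<zero>\<^bsub>M\<^esub> \<in> S" using subgroup.one_closed[OF submodule.axioms(1)[OF assms]] by simp
  show i: "\<And>a. a \<in> S \<Longrightarrow> \<ominus>\<^bsub>M\<^esub> a \<in> S" using submoduleE(3)[OF assms] .
  show a: "\<And>a b. a \<in> S \<Longrightarrow> b \<in> S \<Longrightarrow> a \<oplus>\<^bsub>M\<^esub> b \<in> S" using submoduleE(5)[OF assms] .
  show "\<And>r a. r \<in> carrier R \<Longrightarrow> a \<in> S \<Longrightarrow> r \<odot>\<^bsub>M\<^esub> a \<in> S" using submoduleE(4)[OF assms] .
  show "\<And>a b. a \<in> S \<Longrightarrow> b \<in> S \<Longrightarrow> a \<ominus>\<^bsub>M\<^esub> b \<in> S"
    using i a submoduleE(1)[OF assms] by (metis M.minus_eq)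
qed

lemma mod_hom_closed: "mod_hom R A B h \<Longrightarrow> a \<in> carrier A \<Longrightarrow> h a \<in> carrier B"
  unfolding mod_hom_def by blast

lemma mod_hom_add: "mod_hom R A B h \<Longrightarrow> a \<in> carrier A \<Longrightarrow> b \<in> carrier A \<Longrightarrow> h (a \<oplus>\<^bsub>A\<^esub> b) = h a \<oplus>\<^bsub>B\<^esub> h b"
  unfolding mod_hom_def by blast

lemma mod_hom_smult: "mod_hom R A B h \<Longrightarrow> r \<in> carrier R \<Longrightarrow> a \<in> carrier A \<Longrightarrow> h (r \<odot>\<^bsub>A\<^esub> a) = r \<odot>\<^bsub>B\<^esub> h a"
  unfolding mod_hom_def by blast

lemma mod_hom_zero:
  assumes A: "module R A" and B: "module R B" and h: "mod_hom R A B h"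
  shows "h \<zero>\<^bsub>A\<^esub> = \<zero>\<^bsub>B\<^esub>"
proof -
  interpret A: module R A by (rule A)
  interpret B: module R B by (rule B)
  have "h (\<zero>\<^bsub>R\<^esub> \<odot>\<^bsub>A\<^esub> \<zero>\<^bsub>A\<^esub>) = \<zero>\<^bsub>R\<^esub> \<odot>\<^bsub>B\<^esub> h \<zero>\<^bsub>A\<^esub>"
    by (rule mod_hom_smult[OF h]) simp_all
  moreover have "h \<zero>\<^bsub>A\<^esub> \<in> carrier B" by (rule mod_hom_closed[OF h]) simp
  ultimately show ?thesis by simp
qed

lemma mod_hom_a_inv:
  assumes A: "module R A" and B: "module R B" and h: "mod_hom R A B h" and a: "a \<in> carrier A"
  shows "h (\<ominus>\<^bsub>A\<^esub> a) = \<ominus>\<^bsub>B\<^esub> h a"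
proof -
  interpret A: module R A by (rule A)
  interpret B: module R B by (rule B)
  have ha: "h a \<in> carrier B" by (rule mod_hom_closed[OF h a])
  have "\<ominus>\<^bsub>A\<^esub> a = (\<ominus>\<^bsub>R\<^esub> \<one>\<^bsub>R\<^esub>) \<odot>\<^bsub>A\<^esub> a" using a A.smult_l_minus[of "\<one>\<^bsub>R\<^esub>" a] by simp
  moreover have "\<ominus>\<^bsub>B\<^esub> h a = (\<ominus>\<^bsub>R\<^esub> \<one>\<^bsub>R\<^esub>) \<odot>\<^bsub>B\<^esub> h a" using ha B.smult_l_minus[of "\<one>\<^bsub>R\<^esub>" "h a"] by simp
  moreover have "h ((\<ominus>\<^bsub>R\<^esub> \<one>\<^bsub>R\<^esub>) \<odot>\<^bsub>A\<^esub> a) = (\<ominus>\<^bsub>R\<^esub> \<one>\<^bsub>R\<^esub>) \<odot>\<^bsub>B\<^esub> h a"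
    by (rule mod_hom_smult[OF h _ a]) simp
  ultimately show ?thesis by simp
qed

lemma mod_hom_minus:
  assumes A: "module R A" and B: "module R B" and h: "mod_hom R A B h" and a: "a \<in> carrier A" and b: "b \<in> carrier A"
  shows "h (a \<ominus>\<^bsub>A\<^esub> b) = h a \<ominus>\<^bsub>B\<^esub> h b"
proof -
  interpret A: module R A by (rule A)
  interpret B: module R B by (rule B)
  have "h (a \<ominus>\<^bsub>A\<^esub> b) = h (a \<oplus>\<^bsub>A\<^esub> \<ominus>\<^bsub>A\<^esub> b)" by (simp add: A.minus_eq)
  also have "\<dots> = h a \<oplus>\<^bsub>B\<^esub> h (\<ominus>\<^bsub>A\<^esub> b)" by (rule mod_hom_add[OF h a]) (simp add: b)
  also have "\<dots> = h a \<ominus>\<^bsub>B\<^esub> h b" by (simp add: mod_hom_a_inv[OF A B h b] B.minus_eq)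
  finally show ?thesis .
qed

lemma mod_hom_finsum:
  assumes A: "module R A" and B: "module R B" and h: "mod_hom R A B h"
    and S: "finite S" and f: "f \<in> S \<rightarrow> carrier A"
  shows "h (finsum A f S) = finsum B (\<lambda>i. h (f i)) S"
  using S f
proof (induction S rule: finite_induct)
  case empty
  interpret A: module R A by (rule A)
  interpret B: module R B by (rule B)
  show ?case using mod_hom_zero[OF A B h] by simp
next
  case (insert x F)
  interpret A: module R A by (rule A)
  interpret B: module R B by (rule B)
  have fF: "f \<in> F \<rightarrow> carrier A" "f x \<in> carrier A" using insert.prems by auto
  have hF: "(\<lambda>i. h (f i)) \<in> F \<rightarrow> carrier B" "h (f x) \<in> carrier B" using fF mod_hom_closed[OF h] by auto
  have "h (finsum A f (insert x F)) = h (f x \<oplus>\<^bsub>A\<^esub> finsum A f F)"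
    using insert.hyps fF by simp
  also have "\<dots> = h (f x) \<oplus>\<^bsub>B\<^esub> h (finsum A f F)" by (rule mod_hom_add[OF h fF(2) A.finsum_closed[OF fF(1)]])
  also have "\<dots> = h (f x) \<oplus>\<^bsub>B\<^esub> finsum B (\<lambda>i. h (f i)) F" using insert.IH fF by simp
  also have "\<dots> = finsum B (\<lambda>i. h (f i)) (insert x F)" using insert.hyps hF by simp
  finally show ?case .
qed

lemma mod_hom_comp: "mod_hom R A B f \<Longrightarrow> mod_hom R B C g \<Longrightarrow> mod_hom R A C (\<lambda>a. g (f a))"
  unfolding mod_hom_def by simp

lemma submodule_preimage:
  assumes N1: "module R N1" and N2: "module R N2" and h: "mod_hom R N1 N2 h" and S2: "submodule S2 R N2"
  shows "submodule {f \<in> carrier N1. h f \<in> S2} R N1"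
proof -
  interpret N1: module R N1 by (rule N1)
  interpret N2: module R N2 by (rule N2)
  show ?thesis
  proof (rule N1.submoduleI)
    show "{f \<in> carrier N1. h f \<in> S2} \<subseteq> carrier N1" by blast
    show "\<zero>\<^bsub>N1\<^esub> \<in> {f \<in> carrier N1. h f \<in> S2}" using mod_hom_zero[OF N1 N2 h] N2.submodule_closed(2)[OF S2] by simp
    show "\<And>a. a \<in> {f \<in> carrier N1. h f \<in> S2} \<Longrightarrow> \<ominus>\<^bsub>N1\<^esub> a \<in> {f \<in> carrier N1. h f \<in> S2}"
      using mod_hom_a_inv[OF N1 N2 h] N2.submodule_closed(3)[OF S2] by simp
    show "\<And>a b. a \<in> {f \<in> carrier N1. h f \<in> S2} \<Longrightarrow> b \<in> {f \<in> carrier N1. h f \<in> S2} \<Longrightarrow> a \<oplus>\<^bsub>N1\<^esub> b \<in> {f \<in> carrier N1. h f \<in> S2}"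
      using mod_hom_add[OF h] N2.submodule_closed(4)[OF S2] by simp
    show "\<And>r a. r \<in> carrier R \<Longrightarrow> a \<in> {f \<in> carrier N1. h f \<in> S2} \<Longrightarrow> r \<odot>\<^bsub>N1\<^esub> a \<in> {f \<in> carrier N1. h f \<in> S2}"
      using mod_hom_smult[OF h] N2.submodule_closed(5)[OF S2] by simp
  qed
qed

lemma mod_hom_inj_onI:
  assumes A: "module R A" and B: "module R B" and h: "mod_hom R A B h"
    and ker: "\<And>a. a \<in> carrier A \<Longrightarrow> h a = \<zero>\<^bsub>B\<^esub> \<Longrightarrow> a = \<zero>\<^bsub>A\<^esub>"
  shows "inj_on h (carrier A)"
proof (rule inj_onI)
  interpret A: module R A by (rule A)
  interpret B: module R B by (rule B)
  fix a b assume a: "a \<in> carrier A" and b: "b \<in> carrier A" and e: "h a = h b"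
  have "h (a \<ominus>\<^bsub>A\<^esub> b) = \<zero>\<^bsub>B\<^esub>" using mod_hom_minus[OF A B h a b] e B.minus_self mod_hom_closed[OF h b] by simp
  then have "a \<ominus>\<^bsub>A\<^esub> b = \<zero>\<^bsub>A\<^esub>" using ker a b by simp
  then show "a = b" using A.minus_eq_zero_iff a b by blast
qed

lemma mod_hom_cong:
  assumes A: "module R A" and h: "mod_hom R A B h" and eq: "\<And>a. a \<in> carrier A \<Longrightarrow> h' a = h a"
  shows "mod_hom R A B h'"
proof -
  interpret A: module R A by (rule A)
  show ?thesis using h unfolding mod_hom_def by (simp add: eq)
qed

lemma mod_hom_inv_into:
  assumes A: "module R A" and h: "mod_hom R A B h" and b: "bij_betw h (carrier A) (carrier B)"
  shows "mod_hom R B A (inv_into (carrier A) h)"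
proof -
  interpret A: module R A by (rule A)
  let ?i = "inv_into (carrier A) h"
  have ic: "\<And>y. y \<in> carrier B \<Longrightarrow> ?i y \<in> carrier A" and fi: "\<And>y. y \<in> carrier B \<Longrightarrow> h (?i y) = y"
    using b by (auto simp: bij_betw_def inv_into_into f_inv_into_f)
  have if_: "\<And>x. x \<in> carrier A \<Longrightarrow> ?i (h x) = x" using b by (simp add: bij_betw_def)
  show ?thesis
    unfolding mod_hom_def
  proof (intro conjI ballI)
    fix y assume "y \<in> carrier B" then show "?i y \<in> carrier A" by (rule ic)
  next
    fix y1 y2 assume y: "y1 \<in> carrier B" "y2 \<in> carrier B"
    have "h (?i y1 \<oplus>\<^bsub>A\<^esub> ?i y2) = y1 \<oplus>\<^bsub>B\<^esub> y2" using mod_hom_add[OF h ic ic] y fi by simp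
    then show "?i (y1 \<oplus>\<^bsub>B\<^esub> y2) = ?i y1 \<oplus>\<^bsub>A\<^esub> ?i y2" using if_ ic y by (metis A.a_closed)
  next
    fix r y assume r: "r \<in> carrier R" and y: "y \<in> carrier B"
    have "h (r \<odot>\<^bsub>A\<^esub> ?i y) = r \<odot>\<^bsub>B\<^esub> y" using mod_hom_smult[OF h r ic[OF y]] fi[OF y] by simp
    then show "?i (r \<odot>\<^bsub>B\<^esub> y) = r \<odot>\<^bsub>A\<^esub> ?i y" using if_ ic[OF y] r by (metis A.smult_closed)
  qed
qed

section \<open>Quotient modules\<close>

definition quot_cls :: "('k, 'a) module \<Rightarrow> 'a set \<Rightarrow> 'a \<Rightarrow> 'a set" where
  "quot_cls N S f = {g \<in> carrier N. g \<ominus>\<^bsub>N\<^esub> f \<in> S}"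

text \<open>Same shape as \<open>dir_lim\<close>, so that \<open>dir_lim R M J = quot_mod (dsum M J) (dlim_rel R M J)\<close>.\<close>

definition quot_mod :: "('k, 'a) module \<Rightarrow> 'a set \<Rightarrow> ('k, 'a set) module" where
  "quot_mod N S =
    \<lparr> carrier = quot_cls N S ` carrier N,
      monoid.mult = (\<lambda>A B. undefined), one = undefined,
      zero = quot_cls N S \<zero>\<^bsub>N\<^esub>,
      add = (\<lambda>A B. quot_cls N S (rep A \<oplus>\<^bsub>N\<^esub> rep B)),
      smult = (\<lambda>r A. quot_cls N S (r \<odot>\<^bsub>N\<^esub> rep A)) \<rparr>"

locale submodule_quot = module R N for R :: "('k, 'c) ring_scheme" and N :: "('k, 'a) module" +
  fixes S assumes sub: "submodule S R N"
begin

lemmas sub_closed = submodule_closed[OF sub]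

lemma quot_cls_self: "f \<in> carrier N \<Longrightarrow> f \<in> quot_cls N S f"
  unfolding quot_cls_def using sub_closed(2) by (simp add: minus_self)

lemma quot_cls_eq_iff: assumes "f \<in> carrier N" "g \<in> carrier N"
  shows "quot_cls N S f = quot_cls N S g \<longleftrightarrow> f \<ominus>\<^bsub>N\<^esub> g \<in> S"
proof
  assume "quot_cls N S f = quot_cls N S g"
  then show "f \<ominus>\<^bsub>N\<^esub> g \<in> S" using quot_cls_self[OF assms(1)] unfolding quot_cls_def by blast
next
  assume fg: "f \<ominus>\<^bsub>N\<^esub> g \<in> S"
  have gf: "g \<ominus>\<^bsub>N\<^esub> f \<in> S" using sub_closed(3)[OF fg] a_inv_minus assms by simp
  show "quot_cls N S f = quot_cls N S g" unfolding quot_cls_def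
  proof (intro Collect_cong conj_cong refl iffI)
    fix h assume h: "h \<in> carrier N" and "h \<ominus>\<^bsub>N\<^esub> f \<in> S"
    then have "(h \<ominus>\<^bsub>N\<^esub> f) \<oplus>\<^bsub>N\<^esub> (f \<ominus>\<^bsub>N\<^esub> g) \<in> S" using sub_closed(4) fg by blast
    then show "h \<ominus>\<^bsub>N\<^esub> g \<in> S" using minus_add_minus h assms by simp
  next
    fix h assume h: "h \<in> carrier N" and "h \<ominus>\<^bsub>N\<^esub> g \<in> S"
    then have "(h \<ominus>\<^bsub>N\<^esub> g) \<oplus>\<^bsub>N\<^esub> (g \<ominus>\<^bsub>N\<^esub> f) \<in> S" using sub_closed(4) gf by blast
    then show "h \<ominus>\<^bsub>N\<^esub> f \<in> S" using minus_add_minus h assms by simp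
  qed
qed

lemma rep_quot_cls: assumes "f \<in> carrier N"
  shows "rep (quot_cls N S f) \<in> carrier N" "rep (quot_cls N S f) \<ominus>\<^bsub>N\<^esub> f \<in> S" "quot_cls N S (rep (quot_cls N S f)) = quot_cls N S f"
proof -
  have "rep (quot_cls N S f) \<in> quot_cls N S f" unfolding rep_def using quot_cls_self[OF assms] by (rule someI)
  then show 1: "rep (quot_cls N S f) \<in> carrier N" and 2: "rep (quot_cls N S f) \<ominus>\<^bsub>N\<^esub> f \<in> S" unfolding quot_cls_def by auto
  show "quot_cls N S (rep (quot_cls N S f)) = quot_cls N S f" using quot_cls_eq_iff[OF 1 assms] 2 by simp
qed

lemma quot_mod_carrier: "carrier (quot_mod N S) = quot_cls N S ` carrier N"
  by (simp add: quot_mod_def)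

lemma quot_mod_zero: "\<zero>\<^bsub>quot_mod N S\<^esub> = quot_cls N S \<zero>\<^bsub>N\<^esub>"
  by (simp add: quot_mod_def)

lemma quot_mod_add: assumes f: "f \<in> carrier N" and g: "g \<in> carrier N"
  shows "quot_cls N S f \<oplus>\<^bsub>quot_mod N S\<^esub> quot_cls N S g = quot_cls N S (f \<oplus>\<^bsub>N\<^esub> g)"
proof -
  have "quot_cls N S f \<oplus>\<^bsub>quot_mod N S\<^esub> quot_cls N S g = quot_cls N S (rep (quot_cls N S f) \<oplus>\<^bsub>N\<^esub> rep (quot_cls N S g))"
    by (simp add: quot_mod_def)
  also have "\<dots> = quot_cls N S (f \<oplus>\<^bsub>N\<^esub> g)"
  proof (subst quot_cls_eq_iff)
    have "(rep (quot_cls N S f) \<ominus>\<^bsub>N\<^esub> f) \<oplus>\<^bsub>N\<^esub> (rep (quot_cls N S g) \<ominus>\<^bsub>N\<^esub> g) \<in> S"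
      using sub_closed(4) rep_quot_cls f g by blast
    then show "rep (quot_cls N S f) \<oplus>\<^bsub>N\<^esub> rep (quot_cls N S g) \<ominus>\<^bsub>N\<^esub> (f \<oplus>\<^bsub>N\<^esub> g) \<in> S"
      using add_minus_add rep_quot_cls f g by simp
  qed (use rep_quot_cls f g in auto)
  finally show ?thesis .
qed

lemma quot_mod_smult: assumes r: "r \<in> carrier R" and f: "f \<in> carrier N"
  shows "r \<odot>\<^bsub>quot_mod N S\<^esub> quot_cls N S f = quot_cls N S (r \<odot>\<^bsub>N\<^esub> f)"
proof -
  have "r \<odot>\<^bsub>quot_mod N S\<^esub> quot_cls N S f = quot_cls N S (r \<odot>\<^bsub>N\<^esub> rep (quot_cls N S f))"
    by (simp add: quot_mod_def)
  also have "\<dots> = quot_cls N S (r \<odot>\<^bsub>N\<^esub> f)"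
  proof (subst quot_cls_eq_iff)
    show "r \<odot>\<^bsub>N\<^esub> rep (quot_cls N S f) \<ominus>\<^bsub>N\<^esub> r \<odot>\<^bsub>N\<^esub> f \<in> S"
      using smult_minus_distr[OF r rep_quot_cls(1)[OF f] f] sub_closed(5)[OF r rep_quot_cls(2)[OF f]] by simp
  qed (use rep_quot_cls f r in auto)
  finally show ?thesis .
qed

lemma quot_mod_cases: assumes "A \<in> carrier (quot_mod N S)" obtains f where "f \<in> carrier N" "A = quot_cls N S f"
  using assms by (auto simp: quot_mod_carrier)

lemma quot_cls_closed: "f \<in> carrier N \<Longrightarrow> quot_cls N S f \<in> carrier (quot_mod N S)"
  by (simp add: quot_mod_carrier)

lemma quot_mod_module: "module R (quot_mod N S)"
proof (rule moduleI)
  show "cring R" by (rule R.is_cring)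
  show "abelian_group (quot_mod N S)"
  proof (rule abelian_groupI)
    fix x y assume "x \<in> carrier (quot_mod N S)" "y \<in> carrier (quot_mod N S)"
    then show "x \<oplus>\<^bsub>quot_mod N S\<^esub> y \<in> carrier (quot_mod N S)"
      by (elim quot_mod_cases) (simp add: quot_mod_add quot_cls_closed)
  next
    show "\<zero>\<^bsub>quot_mod N S\<^esub> \<in> carrier (quot_mod N S)" by (simp add: quot_mod_zero quot_cls_closed)
  next
    fix x y z assume "x \<in> carrier (quot_mod N S)" "y \<in> carrier (quot_mod N S)" "z \<in> carrier (quot_mod N S)"
    then show "x \<oplus>\<^bsub>quot_mod N S\<^esub> y \<oplus>\<^bsub>quot_mod N S\<^esub> z = x \<oplus>\<^bsub>quot_mod N S\<^esub> (y \<oplus>\<^bsub>quot_mod N S\<^esub> z)"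
      by (elim quot_mod_cases) (simp add: quot_mod_add M.a_assoc)
  next
    fix x y assume "x \<in> carrier (quot_mod N S)" "y \<in> carrier (quot_mod N S)"
    then show "x \<oplus>\<^bsub>quot_mod N S\<^esub> y = y \<oplus>\<^bsub>quot_mod N S\<^esub> x"
      by (elim quot_mod_cases) (simp add: quot_mod_add M.a_comm)
  next
    fix x assume "x \<in> carrier (quot_mod N S)"
    then show "\<zero>\<^bsub>quot_mod N S\<^esub> \<oplus>\<^bsub>quot_mod N S\<^esub> x = x"
      by (elim quot_mod_cases) (simp add: quot_mod_add quot_mod_zero)
  next
    fix x assume "x \<in> carrier (quot_mod N S)"
    then show "\<exists>y\<in>carrier (quot_mod N S). y \<oplus>\<^bsub>quot_mod N S\<^esub> x = \<zero>\<^bsub>quot_mod N S\<^esub>"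
    proof (elim quot_mod_cases)
      fix f assume f: "f \<in> carrier N" "x = quot_cls N S f"
      show ?thesis
        by (rule bexI[of _ "quot_cls N S (\<ominus>\<^bsub>N\<^esub> f)"]) (simp_all add: f quot_mod_add quot_mod_zero quot_cls_closed M.l_neg)
    qed
  qed
next
  fix a x assume "a \<in> carrier R" "x \<in> carrier (quot_mod N S)"
  then show "a \<odot>\<^bsub>quot_mod N S\<^esub> x \<in> carrier (quot_mod N S)"
    by (elim quot_mod_cases) (simp add: quot_mod_smult quot_cls_closed)
next
  fix a b x assume "a \<in> carrier R" "b \<in> carrier R" "x \<in> carrier (quot_mod N S)"
  then show "(a \<oplus>\<^bsub>R\<^esub> b) \<odot>\<^bsub>quot_mod N S\<^esub> x = a \<odot>\<^bsub>quot_mod N S\<^esub> x \<oplus>\<^bsub>quot_mod N S\<^esub> b \<odot>\<^bsub>quot_mod N S\<^esub> x"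
    by (elim quot_mod_cases) (simp add: quot_mod_smult quot_mod_add smult_l_distr)
next
  fix a x y assume "a \<in> carrier R" "x \<in> carrier (quot_mod N S)" "y \<in> carrier (quot_mod N S)"
  then show "a \<odot>\<^bsub>quot_mod N S\<^esub> (x \<oplus>\<^bsub>quot_mod N S\<^esub> y) = a \<odot>\<^bsub>quot_mod N S\<^esub> x \<oplus>\<^bsub>quot_mod N S\<^esub> a \<odot>\<^bsub>quot_mod N S\<^esub> y"
    by (elim quot_mod_cases) (simp add: quot_mod_smult quot_mod_add smult_r_distr)
next
  fix a b x assume "a \<in> carrier R" "b \<in> carrier R" "x \<in> carrier (quot_mod N S)"
  then show "(a \<otimes>\<^bsub>R\<^esub> b) \<odot>\<^bsub>quot_mod N S\<^esub> x = a \<odot>\<^bsub>quot_mod N S\<^esub> (b \<odot>\<^bsub>quot_mod N S\<^esub> x)"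
    by (elim quot_mod_cases) (simp add: quot_mod_smult smult_assoc1)
next
  fix x assume "x \<in> carrier (quot_mod N S)"
  then show "\<one>\<^bsub>R\<^esub> \<odot>\<^bsub>quot_mod N S\<^esub> x = x"
    by (elim quot_mod_cases) (simp add: quot_mod_smult)
qed

lemma mod_hom_quot_cls: "mod_hom R N (quot_mod N S) (quot_cls N S)"
  unfolding mod_hom_def by (simp add: quot_cls_closed quot_mod_add quot_mod_smult)

lemma rep_in_quot_mod: assumes "A \<in> carrier (quot_mod N S)"
  shows "rep A \<in> carrier N" "quot_cls N S (rep A) = A"
  using assms by (auto elim!: quot_mod_cases simp: rep_quot_cls)

lemma quot_cls_eq_zero_iff: "f \<in> carrier N \<Longrightarrow> quot_cls N S f = \<zero>\<^bsub>quot_mod N S\<^esub> \<longleftrightarrow> f \<in> S"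
  by (simp add: quot_mod_zero quot_cls_eq_iff minus_zero_right)

context
  fixes T h
  assumes T: "module R T" and h: "mod_hom R N T h" and h_S: "\<And>f. f \<in> S \<Longrightarrow> h f = \<zero>\<^bsub>T\<^esub>"
begin

lemma lift_rep_quot_cls:
  assumes f: "f \<in> carrier N"
  shows "h (rep (quot_cls N S f)) = h f"
proof -
  interpret T: module R T by (rule T)
  have "h (rep (quot_cls N S f)) \<ominus>\<^bsub>T\<^esub> h f = h (rep (quot_cls N S f) \<ominus>\<^bsub>N\<^esub> f)"
    using mod_hom_minus[OF module_axioms T h rep_quot_cls(1)[OF f] f] by simp
  also have "\<dots> = \<zero>\<^bsub>T\<^esub>" using h_S rep_quot_cls(2)[OF f] by blast
  finally show ?thesis
    using T.minus_eq_zero_iff mod_hom_closed[OF h] rep_quot_cls(1)[OF f] f by blast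
qed

lemma mod_hom_lift: "mod_hom R (quot_mod N S) T (\<lambda>A. h (rep A))"
  unfolding mod_hom_def
proof (intro conjI ballI)
  fix A assume "A \<in> carrier (quot_mod N S)"
  then show "h (rep A) \<in> carrier T" using rep_in_quot_mod(1) mod_hom_closed[OF h] by blast
next
  fix A B assume "A \<in> carrier (quot_mod N S)" "B \<in> carrier (quot_mod N S)"
  then show "h (rep (A \<oplus>\<^bsub>quot_mod N S\<^esub> B)) = h (rep A) \<oplus>\<^bsub>T\<^esub> h (rep B)"
    by (elim quot_mod_cases) (simp add: quot_mod_add lift_rep_quot_cls mod_hom_add[OF h])
next
  fix r A assume "r \<in> carrier R" "A \<in> carrier (quot_mod N S)"
  then show "h (rep (r \<odot>\<^bsub>quot_mod N S\<^esub> A)) = r \<odot>\<^bsub>T\<^esub> h (rep A)"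
    by (elim quot_mod_cases) (simp add: quot_mod_smult lift_rep_quot_cls mod_hom_smult[OF h])
qed

end

context
  fixes N' S' h
  assumes Q': "submodule_quot R N' S'" and h: "mod_hom R N N' h" and h_S: "\<And>f. f \<in> S \<Longrightarrow> h f \<in> S'"
begin

lemma mod_hom_quot_cls_comp: "mod_hom R N (quot_mod N' S') (\<lambda>f. quot_cls N' S' (h f))"
  using mod_hom_comp[OF h submodule_quot.mod_hom_quot_cls[OF Q']] .

lemma quot_cls_comp_vanishes: "f \<in> S \<Longrightarrow> quot_cls N' S' (h f) = \<zero>\<^bsub>quot_mod N' S'\<^esub>"
  using submodule_quot.quot_cls_eq_zero_iff[OF Q'] h_S sub_closed(1) mod_hom_closed[OF h] by blast

lemma induced_rep_quot_cls:
  "f \<in> carrier N \<Longrightarrow> quot_cls N' S' (h (rep (quot_cls N S f))) = quot_cls N' S' (h f)"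
  by (rule lift_rep_quot_cls[OF submodule_quot.quot_mod_module[OF Q']
        mod_hom_quot_cls_comp quot_cls_comp_vanishes])

lemma mod_hom_induced: "mod_hom R (quot_mod N S) (quot_mod N' S') (\<lambda>A. quot_cls N' S' (h (rep A)))"
  by (rule mod_hom_lift[OF submodule_quot.quot_mod_module[OF Q']
        mod_hom_quot_cls_comp quot_cls_comp_vanishes])

end

end

locale pers_module =
  fixes R :: "'k ring" and M :: "('p::order, 'k, 'm) pmod"
  assumes cR: "cring R" and pmM: "pers_mod R M"
begin

lemma module_at: "module R (fst M x)" using pmM unfolding pers_mod_def by simp
lemma abelian_group_at: "abelian_group (fst M x)" by (rule module.axioms(2)[OF module_at])
lemma abelian_monoid_at: "abelian_monoid (fst M x)" by (rule abelian_group.axioms(1)[OF abelian_group_at])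
lemma map_hom: "x \<le> y \<Longrightarrow> mod_hom R (fst M x) (fst M y) (snd M x y)" using pmM unfolding pers_mod_def by simp
lemma map_id: "a \<in> carrier (fst M x) \<Longrightarrow> snd M x x a = a" using pmM unfolding pers_mod_def by simp
lemma map_comp: "x \<le> y \<Longrightarrow> y \<le> z \<Longrightarrow> a \<in> carrier (fst M x) \<Longrightarrow> snd M y z (snd M x y a) = snd M x z a"
  using pmM unfolding pers_mod_def by simp

lemma map_closed: "x \<le> y \<Longrightarrow> a \<in> carrier (fst M x) \<Longrightarrow> snd M x y a \<in> carrier (fst M y)"
  by (rule mod_hom_closed[OF map_hom])
lemma map_add: "x \<le> y \<Longrightarrow> a \<in> carrier (fst M x) \<Longrightarrow> b \<in> carrier (fst M x) \<Longrightarrow>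
   snd M x y (a \<oplus>\<^bsub>fst M x\<^esub> b) = snd M x y a \<oplus>\<^bsub>fst M y\<^esub> snd M x y b"
  by (rule mod_hom_add[OF map_hom])
lemma map_smult: "x \<le> y \<Longrightarrow> r \<in> carrier R \<Longrightarrow> a \<in> carrier (fst M x) \<Longrightarrow>
   snd M x y (r \<odot>\<^bsub>fst M x\<^esub> a) = r \<odot>\<^bsub>fst M y\<^esub> snd M x y a"
  by (rule mod_hom_smult[OF map_hom])
lemma map_zero: "x \<le> y \<Longrightarrow> snd M x y \<zero>\<^bsub>fst M x\<^esub> = \<zero>\<^bsub>fst M y\<^esub>"
  by (rule mod_hom_zero[OF module_at module_at map_hom])
lemma map_a_inv: "x \<le> y \<Longrightarrow> a \<in> carrier (fst M x) \<Longrightarrow> snd M x y (\<ominus>\<^bsub>fst M x\<^esub> a) = \<ominus>\<^bsub>fst M y\<^esub> snd M x y a"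
  by (rule mod_hom_a_inv[OF module_at module_at map_hom])

lemma add_closed_at: "a \<in> carrier (fst M x) \<Longrightarrow> b \<in> carrier (fst M x) \<Longrightarrow> a \<oplus>\<^bsub>fst M x\<^esub> b \<in> carrier (fst M x)"
  by (rule abelian_monoid.a_closed[OF abelian_monoid_at])
lemma zero_closed_at: "\<zero>\<^bsub>fst M x\<^esub> \<in> carrier (fst M x)"
  by (rule abelian_monoid.zero_closed[OF abelian_monoid_at])
lemma a_inv_closed_at: "a \<in> carrier (fst M x) \<Longrightarrow> \<ominus>\<^bsub>fst M x\<^esub> a \<in> carrier (fst M x)"
  by (rule abelian_group.a_inv_closed[OF abelian_group_at])
lemma smult_closed_at: "r \<in> carrier R \<Longrightarrow> a \<in> carrier (fst M x) \<Longrightarrow> r \<odot>\<^bsub>fst M x\<^esub> a \<in> carrier (fst M x)"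
  by (rule module.smult_closed[OF module_at])

lemmas closed_at = add_closed_at zero_closed_at a_inv_closed_at smult_closed_at map_closed

lemma a_inv_zero_at: "\<ominus>\<^bsub>fst M x\<^esub> \<zero>\<^bsub>fst M x\<^esub> = \<zero>\<^bsub>fst M x\<^esub>"
  by (rule abelian_group.minus_equality[OF abelian_group_at]) (simp_all add: zero_closed_at abelian_monoid.l_zero[OF abelian_monoid_at])

end

section \<open>Inverse limits and the upper module\<close>

context pers_module
begin

lemma inv_lim_carrier: "f \<in> carrier (inv_lim M I) \<longleftrightarrow>
   (\<forall>x\<in>I. f x \<in> carrier (fst M x)) \<and> (\<forall>x. x \<notin> I \<longrightarrow> f x = undefined) \<and>
   (\<forall>x\<in>I. \<forall>y\<in>I. x \<le> y \<longrightarrow> snd M x y (f x) = f y)"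
  by (simp add: inv_lim_def)

lemma inv_lim_zero: "\<zero>\<^bsub>inv_lim M I\<^esub> = (\<lambda>x. if x \<in> I then \<zero>\<^bsub>fst M x\<^esub> else undefined)"
  by (simp add: inv_lim_def)
lemma inv_lim_add: "f \<oplus>\<^bsub>inv_lim M I\<^esub> g = (\<lambda>x. if x \<in> I then f x \<oplus>\<^bsub>fst M x\<^esub> g x else undefined)"
  by (simp add: inv_lim_def)
lemma inv_lim_smult: "r \<odot>\<^bsub>inv_lim M I\<^esub> f = (\<lambda>x. if x \<in> I then r \<odot>\<^bsub>fst M x\<^esub> f x else undefined)"
  by (simp add: inv_lim_def)

lemma inv_lim_module: "module R (inv_lim M I)"
proof (rule moduleI)
  show "cring R" by (rule cR)
  show "abelian_group (inv_lim M I)"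
  proof (rule abelian_groupI)
    fix f g assume "f \<in> carrier (inv_lim M I)" "g \<in> carrier (inv_lim M I)"
    then show "f \<oplus>\<^bsub>inv_lim M I\<^esub> g \<in> carrier (inv_lim M I)"
      by (auto simp: inv_lim_carrier inv_lim_add closed_at map_add)
  next
    show "\<zero>\<^bsub>inv_lim M I\<^esub> \<in> carrier (inv_lim M I)"
      by (auto simp: inv_lim_carrier inv_lim_zero closed_at map_zero)
  next
    fix f g h assume "f \<in> carrier (inv_lim M I)" "g \<in> carrier (inv_lim M I)" "h \<in> carrier (inv_lim M I)"
    then show "f \<oplus>\<^bsub>inv_lim M I\<^esub> g \<oplus>\<^bsub>inv_lim M I\<^esub> h = f \<oplus>\<^bsub>inv_lim M I\<^esub> (g \<oplus>\<^bsub>inv_lim M I\<^esub> h)"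
      by (auto simp: inv_lim_carrier inv_lim_add abelian_monoid.a_assoc[OF abelian_monoid_at])
  next
    fix f g assume "f \<in> carrier (inv_lim M I)" "g \<in> carrier (inv_lim M I)"
    then show "f \<oplus>\<^bsub>inv_lim M I\<^esub> g = g \<oplus>\<^bsub>inv_lim M I\<^esub> f"
      by (auto simp: inv_lim_carrier inv_lim_add abelian_monoid.a_comm[OF abelian_monoid_at])
  next
    fix f assume "f \<in> carrier (inv_lim M I)"
    then show "\<zero>\<^bsub>inv_lim M I\<^esub> \<oplus>\<^bsub>inv_lim M I\<^esub> f = f"
      by (auto simp: inv_lim_carrier inv_lim_add inv_lim_zero abelian_monoid.l_zero[OF abelian_monoid_at])
  next
    fix f assume f: "f \<in> carrier (inv_lim M I)"
    show "\<exists>g\<in>carrier (inv_lim M I). g \<oplus>\<^bsub>inv_lim M I\<^esub> f = \<zero>\<^bsub>inv_lim M I\<^esub>"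
      by (rule bexI[of _ "\<lambda>x. if x \<in> I then \<ominus>\<^bsub>fst M x\<^esub> f x else undefined"])
        (use f in \<open>auto simp: inv_lim_carrier inv_lim_add inv_lim_zero closed_at map_a_inv abelian_group.l_neg[OF abelian_group_at]\<close>)
  qed
next
  fix a f assume "a \<in> carrier R" "f \<in> carrier (inv_lim M I)"
  then show "a \<odot>\<^bsub>inv_lim M I\<^esub> f \<in> carrier (inv_lim M I)"
    by (auto simp: inv_lim_carrier inv_lim_smult closed_at map_smult)
next
  fix a b f assume "a \<in> carrier R" "b \<in> carrier R" "f \<in> carrier (inv_lim M I)"
  then show "(a \<oplus>\<^bsub>R\<^esub> b) \<odot>\<^bsub>inv_lim M I\<^esub> f = a \<odot>\<^bsub>inv_lim M I\<^esub> f \<oplus>\<^bsub>inv_lim M I\<^esub> b \<odot>\<^bsub>inv_lim M I\<^esub> f"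
    by (auto simp: inv_lim_carrier inv_lim_smult inv_lim_add module.smult_l_distr[OF module_at])
next
  fix a f g assume "a \<in> carrier R" "f \<in> carrier (inv_lim M I)" "g \<in> carrier (inv_lim M I)"
  then show "a \<odot>\<^bsub>inv_lim M I\<^esub> (f \<oplus>\<^bsub>inv_lim M I\<^esub> g) = a \<odot>\<^bsub>inv_lim M I\<^esub> f \<oplus>\<^bsub>inv_lim M I\<^esub> a \<odot>\<^bsub>inv_lim M I\<^esub> g"
    by (auto simp: inv_lim_carrier inv_lim_smult inv_lim_add module.smult_r_distr[OF module_at])
next
  fix a b f assume "a \<in> carrier R" "b \<in> carrier R" "f \<in> carrier (inv_lim M I)"
  then show "(a \<otimes>\<^bsub>R\<^esub> b) \<odot>\<^bsub>inv_lim M I\<^esub> f = a \<odot>\<^bsub>inv_lim M I\<^esub> (b \<odot>\<^bsub>inv_lim M I\<^esub> f)"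
    by (auto simp: inv_lim_carrier inv_lim_smult module.smult_assoc1[OF module_at])
next
  fix f assume "f \<in> carrier (inv_lim M I)"
  then show "\<one>\<^bsub>R\<^esub> \<odot>\<^bsub>inv_lim M I\<^esub> f = f"
    by (auto simp: inv_lim_carrier inv_lim_smult module.smult_one[OF module_at])
qed

lemma fst_upper: "fst (upper M) p = inv_lim M {x. p \<lless> x}" by (simp add: upper_def)
lemma snd_upper: "snd (upper M) p q f = (\<lambda>x. if q \<lless> x then f x else undefined)" by (simp add: upper_def)

lemma pers_mod_upper: "pers_mod R (upper M)"
  unfolding pers_mod_def
proof (intro conjI allI impI ballI)
  fix p show "module R (fst (upper M) p)" by (simp add: fst_upper inv_lim_module)
next
  fix p q :: 'p assume pq: "p \<le> q"
  have sub: "\<And>x. q \<lless> x \<Longrightarrow> p \<lless> x" using pq le_way_below_trans by blast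
  show "mod_hom R (fst (upper M) p) (fst (upper M) q) (snd (upper M) p q)"
    unfolding mod_hom_def
  proof (intro conjI ballI)
    fix f assume "f \<in> carrier (fst (upper M) p)"
    then show "snd (upper M) p q f \<in> carrier (fst (upper M) q)"
      by (simp add: fst_upper snd_upper inv_lim_carrier sub)
  next
    fix f g assume "f \<in> carrier (fst (upper M) p)" "g \<in> carrier (fst (upper M) p)"
    show "snd (upper M) p q (f \<oplus>\<^bsub>fst (upper M) p\<^esub> g) =
          snd (upper M) p q f \<oplus>\<^bsub>fst (upper M) q\<^esub> snd (upper M) p q g"
      by (rule ext) (simp add: fst_upper snd_upper inv_lim_add sub)
  next
    fix r f assume "r \<in> carrier R" "f \<in> carrier (fst (upper M) p)"
    show "snd (upper M) p q (r \<odot>\<^bsub>fst (upper M) p\<^esub> f) = r \<odot>\<^bsub>fst (upper M) q\<^esub> snd (upper M) p q f"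
      by (rule ext) (simp add: fst_upper snd_upper inv_lim_smult sub)
  qed
next
  fix p and f assume "f \<in> carrier (fst (upper M) p)"
  then show "snd (upper M) p p f = f"
    by (intro ext) (simp add: fst_upper snd_upper inv_lim_carrier)
next
  fix p q r :: 'p and f assume "p \<le> q" "q \<le> r" "f \<in> carrier (fst (upper M) p)"
  then have "\<And>x. r \<lless> x \<Longrightarrow> q \<lless> x" using le_way_below_trans by blast
  then show "snd (upper M) q r (snd (upper M) p q f) = snd (upper M) p r f"
    by (intro ext) (simp add: snd_upper)
qed

lemma pers_module_upper: "pers_module R (upper M)"
  by (rule pers_module.intro[OF cR pers_mod_upper])

lemma upper_unit_closed: assumes a: "a \<in> carrier (fst M p)"
  shows "upper_unit M p a \<in> carrier (fst (upper M) p)"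
  unfolding fst_upper inv_lim_carrier
proof (intro conjI ballI allI impI)
  fix x assume "x \<in> {x. p \<lless> x}"
  then show "upper_unit M p a x \<in> carrier (fst M x)"
    using a by (simp add: upper_unit_def map_closed[OF way_below_imp_le])
next
  fix x assume "x \<notin> {x. p \<lless> x}" then show "upper_unit M p a x = undefined"
    by (simp add: upper_unit_def)
next
  fix x y assume "x \<in> {x. p \<lless> x}" "y \<in> {x. p \<lless> x}" "x \<le> y"
  then show "snd M x y (upper_unit M p a x) = upper_unit M p a y"
    using a by (simp add: upper_unit_def map_comp[OF way_below_imp_le])
qed

lemma upper_carrier: "f \<in> carrier (fst (upper M) p) \<longleftrightarrow>
   (\<forall>x. p \<lless> x \<longrightarrow> f x \<in> carrier (fst M x)) \<and> (\<forall>x. \<not> p \<lless> x \<longrightarrow> f x = undefined) \<and>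
   (\<forall>x y. p \<lless> x \<longrightarrow> p \<lless> y \<longrightarrow> x \<le> y \<longrightarrow> snd M x y (f x) = f y)"
  by (simp add: fst_upper inv_lim_carrier)

lemma mod_hom_upper_unit: "mod_hom R (fst M p) (fst (upper M) p) (upper_unit M p)"
  unfolding mod_hom_def
proof (intro conjI ballI)
  fix a assume "a \<in> carrier (fst M p)"
  then show "upper_unit M p a \<in> carrier (fst (upper M) p)" by (rule upper_unit_closed)
next
  fix a b assume "a \<in> carrier (fst M p)" "b \<in> carrier (fst M p)"
  then show "upper_unit M p (a \<oplus>\<^bsub>fst M p\<^esub> b) = upper_unit M p a \<oplus>\<^bsub>fst (upper M) p\<^esub> upper_unit M p b"
    by (intro ext) (simp add: upper_unit_def fst_upper inv_lim_add map_add[OF way_below_imp_le])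
next
  fix r a assume "r \<in> carrier R" "a \<in> carrier (fst M p)"
  then show "upper_unit M p (r \<odot>\<^bsub>fst M p\<^esub> a) = r \<odot>\<^bsub>fst (upper M) p\<^esub> upper_unit M p a"
    by (intro ext) (simp add: upper_unit_def fst_upper inv_lim_smult map_smult[OF way_below_imp_le])
qed

lemma upper_unit_natural:
  assumes "p \<le> q" "a \<in> carrier (fst M p)"
  shows "upper_unit M q (snd M p q a) = snd (upper M) p q (upper_unit M p a)"
proof -
  have "\<And>z. q \<lless> z \<Longrightarrow> p \<lless> z" using assms(1) le_way_below_trans by blast
  then show ?thesis
    by (intro ext) (simp add: upper_unit_def snd_upper map_comp[OF assms(1) way_below_imp_le] assms(2))
qed

end

section \<open>Direct sums and direct limits\<close>

context pers_module
begin

lemma dsum_carrier: "f \<in> carrier (dsum M J) \<longleftrightarrow>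
   (\<forall>x\<in>J. f x \<in> carrier (fst M x)) \<and> (\<forall>x. x \<notin> J \<longrightarrow> f x = undefined) \<and>
   finite {x\<in>J. f x \<noteq> \<zero>\<^bsub>fst M x\<^esub>}"
  by (simp add: dsum_def)
lemma dsum_zero: "\<zero>\<^bsub>dsum M J\<^esub> = (\<lambda>x. if x \<in> J then \<zero>\<^bsub>fst M x\<^esub> else undefined)"
  by (simp add: dsum_def)
lemma dsum_add: "f \<oplus>\<^bsub>dsum M J\<^esub> g = (\<lambda>x. if x \<in> J then f x \<oplus>\<^bsub>fst M x\<^esub> g x else undefined)"
  by (simp add: dsum_def)
lemma dsum_smult: "r \<odot>\<^bsub>dsum M J\<^esub> f = (\<lambda>x. if x \<in> J then r \<odot>\<^bsub>fst M x\<^esub> f x else undefined)"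
  by (simp add: dsum_def)

definition supp :: "'p set \<Rightarrow> ('p \<Rightarrow> 'm) \<Rightarrow> 'p set" where
  "supp J f = {x\<in>J. f x \<noteq> \<zero>\<^bsub>fst M x\<^esub>}"

lemma dsum_carrierI: "(\<And>x. x \<in> J \<Longrightarrow> f x \<in> carrier (fst M x)) \<Longrightarrow> (\<And>x. x \<notin> J \<Longrightarrow> f x = undefined) \<Longrightarrow>
  finite (supp J f) \<Longrightarrow> f \<in> carrier (dsum M J)"
  by (simp add: dsum_carrier supp_def)

lemma dsum_carrierD: "f \<in> carrier (dsum M J) \<Longrightarrow> x \<in> J \<Longrightarrow> f x \<in> carrier (fst M x)"
  "f \<in> carrier (dsum M J) \<Longrightarrow> x \<notin> J \<Longrightarrow> f x = undefined"
  "f \<in> carrier (dsum M J) \<Longrightarrow> finite (supp J f)"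
  by (simp_all add: dsum_carrier supp_def)

lemma dsum_module: "module R (dsum M J)"
proof (rule moduleI)
  show "cring R" by (rule cR)
  show "abelian_group (dsum M J)"
  proof (rule abelian_groupI)
    fix f g assume f: "f \<in> carrier (dsum M J)" and g: "g \<in> carrier (dsum M J)"
    show "f \<oplus>\<^bsub>dsum M J\<^esub> g \<in> carrier (dsum M J)"
    proof (rule dsum_carrierI)
      have "supp J (f \<oplus>\<^bsub>dsum M J\<^esub> g) \<subseteq> supp J f \<union> supp J g"
        by (auto simp: supp_def dsum_add abelian_monoid.l_zero[OF abelian_monoid_at] closed_at)
      then show "finite (supp J (f \<oplus>\<^bsub>dsum M J\<^esub> g))"
        using dsum_carrierD(3)[OF f] dsum_carrierD(3)[OF g] finite_subset by blast
    qed (simp_all add: dsum_add dsum_carrierD[OF f] dsum_carrierD[OF g] closed_at)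
  next
    show "\<zero>\<^bsub>dsum M J\<^esub> \<in> carrier (dsum M J)"
      by (rule dsum_carrierI) (simp_all add: dsum_zero closed_at supp_def)
  next
    fix f g h assume "f \<in> carrier (dsum M J)" "g \<in> carrier (dsum M J)" "h \<in> carrier (dsum M J)"
    then show "f \<oplus>\<^bsub>dsum M J\<^esub> g \<oplus>\<^bsub>dsum M J\<^esub> h = f \<oplus>\<^bsub>dsum M J\<^esub> (g \<oplus>\<^bsub>dsum M J\<^esub> h)"
      by (intro ext) (simp add: dsum_add dsum_carrierD abelian_monoid.a_assoc[OF abelian_monoid_at])
  next
    fix f g assume "f \<in> carrier (dsum M J)" "g \<in> carrier (dsum M J)"
    then show "f \<oplus>\<^bsub>dsum M J\<^esub> g = g \<oplus>\<^bsub>dsum M J\<^esub> f"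
      by (intro ext) (simp add: dsum_add dsum_carrierD abelian_monoid.a_comm[OF abelian_monoid_at])
  next
    fix f assume "f \<in> carrier (dsum M J)"
    then show "\<zero>\<^bsub>dsum M J\<^esub> \<oplus>\<^bsub>dsum M J\<^esub> f = f"
      by (intro ext) (simp add: dsum_add dsum_zero dsum_carrierD abelian_monoid.l_zero[OF abelian_monoid_at])
  next
    fix f assume f: "f \<in> carrier (dsum M J)"
    define g where "g = (\<lambda>x. if x \<in> J then \<ominus>\<^bsub>fst M x\<^esub> f x else undefined)"
    have "g \<in> carrier (dsum M J)"
    proof (rule dsum_carrierI)
      have "supp J g \<subseteq> supp J f"
        by (auto simp: supp_def g_def a_inv_zero_at )
      then show "finite (supp J g)" using dsum_carrierD(3)[OF f] finite_subset by blast
    qed (simp_all add: g_def dsum_carrierD[OF f] closed_at)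
    moreover have "g \<oplus>\<^bsub>dsum M J\<^esub> f = \<zero>\<^bsub>dsum M J\<^esub>"
      by (intro ext) (simp add: g_def dsum_add dsum_zero dsum_carrierD[OF f] abelian_group.l_neg[OF abelian_group_at])
    ultimately show "\<exists>g\<in>carrier (dsum M J). g \<oplus>\<^bsub>dsum M J\<^esub> f = \<zero>\<^bsub>dsum M J\<^esub>" by blast
  qed
next
  fix a f assume a: "a \<in> carrier R" and f: "f \<in> carrier (dsum M J)"
  show "a \<odot>\<^bsub>dsum M J\<^esub> f \<in> carrier (dsum M J)"
  proof (rule dsum_carrierI)
    have "supp J (a \<odot>\<^bsub>dsum M J\<^esub> f) \<subseteq> supp J f"
      using a by (auto simp: supp_def dsum_smult module.smult_r_null[OF module_at])
    then show "finite (supp J (a \<odot>\<^bsub>dsum M J\<^esub> f))" using dsum_carrierD(3)[OF f] finite_subset by blast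
  qed (simp_all add: a dsum_smult dsum_carrierD[OF f] closed_at)
next
  fix a b f assume "a \<in> carrier R" "b \<in> carrier R" "f \<in> carrier (dsum M J)"
  then show "(a \<oplus>\<^bsub>R\<^esub> b) \<odot>\<^bsub>dsum M J\<^esub> f = a \<odot>\<^bsub>dsum M J\<^esub> f \<oplus>\<^bsub>dsum M J\<^esub> b \<odot>\<^bsub>dsum M J\<^esub> f"
    by (intro ext) (simp add: dsum_smult dsum_add dsum_carrierD module.smult_l_distr[OF module_at])
next
  fix a f g assume "a \<in> carrier R" "f \<in> carrier (dsum M J)" "g \<in> carrier (dsum M J)"
  then show "a \<odot>\<^bsub>dsum M J\<^esub> (f \<oplus>\<^bsub>dsum M J\<^esub> g) = a \<odot>\<^bsub>dsum M J\<^esub> f \<oplus>\<^bsub>dsum M J\<^esub> a \<odot>\<^bsub>dsum M J\<^esub> g"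
    by (intro ext) (simp add: dsum_smult dsum_add dsum_carrierD module.smult_r_distr[OF module_at])
next
  fix a b f assume "a \<in> carrier R" "b \<in> carrier R" "f \<in> carrier (dsum M J)"
  then show "(a \<otimes>\<^bsub>R\<^esub> b) \<odot>\<^bsub>dsum M J\<^esub> f = a \<odot>\<^bsub>dsum M J\<^esub> (b \<odot>\<^bsub>dsum M J\<^esub> f)"
    by (intro ext) (simp add: dsum_smult dsum_carrierD module.smult_assoc1[OF module_at])
next
  fix f assume "f \<in> carrier (dsum M J)"
  then show "\<one>\<^bsub>R\<^esub> \<odot>\<^bsub>dsum M J\<^esub> f = f"
    by (intro ext) (simp add: dsum_smult dsum_carrierD module.smult_one[OF module_at])
qed

lemma dsum_a_inv: "f \<in> carrier (dsum M J) \<Longrightarrow> \<ominus>\<^bsub>dsum M J\<^esub> f = (\<lambda>x. if x \<in> J then \<ominus>\<^bsub>fst M x\<^esub> f x else undefined)"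
proof -
  assume f: "f \<in> carrier (dsum M J)"
  interpret D: module R "dsum M J" by (rule dsum_module)
  define g where "g = (\<lambda>x. if x \<in> J then \<ominus>\<^bsub>fst M x\<^esub> f x else undefined)"
  have gc: "g \<in> carrier (dsum M J)"
  proof (rule dsum_carrierI)
    have "supp J g \<subseteq> supp J f"
      by (auto simp: supp_def g_def a_inv_zero_at )
    then show "finite (supp J g)" using dsum_carrierD(3)[OF f] finite_subset by blast
  qed (simp_all add: g_def dsum_carrierD[OF f] closed_at)
  moreover have "g \<oplus>\<^bsub>dsum M J\<^esub> f = \<zero>\<^bsub>dsum M J\<^esub>"
    by (intro ext) (simp add: g_def dsum_add dsum_zero dsum_carrierD[OF f] abelian_group.l_neg[OF abelian_group_at])
  ultimately show "\<ominus>\<^bsub>dsum M J\<^esub> f = g" using f D.minus_equality by metis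
qed

lemma dsum_ins_apply: "dsum_ins M J x a y = (if y = x then a else if y \<in> J then \<zero>\<^bsub>fst M y\<^esub> else undefined)"
  by (simp add: dsum_ins_def)

lemma supp_dsum_ins: "x \<in> J \<Longrightarrow> supp J (dsum_ins M J x a) \<subseteq> {x}"
  by (auto simp: supp_def dsum_ins_apply)

lemma dsum_ins_closed: "x \<in> J \<Longrightarrow> a \<in> carrier (fst M x) \<Longrightarrow> dsum_ins M J x a \<in> carrier (dsum M J)"
  by (rule dsum_carrierI) (auto simp: dsum_ins_apply closed_at intro: finite_subset[OF supp_dsum_ins])

lemma dsum_ins_add: "x \<in> J \<Longrightarrow> a \<in> carrier (fst M x) \<Longrightarrow> b \<in> carrier (fst M x) \<Longrightarrow>
   dsum_ins M J x (a \<oplus>\<^bsub>fst M x\<^esub> b) = dsum_ins M J x a \<oplus>\<^bsub>dsum M J\<^esub> dsum_ins M J x b"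
  by (intro ext) (simp add: dsum_ins_apply dsum_add abelian_monoid.l_zero[OF abelian_monoid_at] closed_at)

lemma dsum_ins_zero: "x \<in> J \<Longrightarrow> dsum_ins M J x \<zero>\<^bsub>fst M x\<^esub> = \<zero>\<^bsub>dsum M J\<^esub>"
  by (intro ext) (simp add: dsum_ins_apply dsum_zero)

definition rel_gens :: "'p set \<Rightarrow> ('p \<Rightarrow> 'm) set" where
  "rel_gens J = {dsum_ins M J x a \<ominus>\<^bsub>dsum M J\<^esub> dsum_ins M J y (snd M x y a) | x y a.
               x \<in> J \<and> y \<in> J \<and> x \<le> y \<and> a \<in> carrier (fst M x)}"

lemma dlim_rel_eq: "dlim_rel R M J = \<Inter> {N. submodule N R (dsum M J) \<and> rel_gens J \<subseteq> N}"
  by (simp add: dlim_rel_def rel_gens_def)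

lemma rel_gens_closed: "rel_gens J \<subseteq> carrier (dsum M J)"
proof -
  interpret D: module R "dsum M J" by (rule dsum_module)
  show ?thesis unfolding rel_gens_def by (auto intro!: dsum_ins_closed map_closed)
qed

lemma dlim_rel_submodule: "submodule (dlim_rel R M J) R (dsum M J)"
proof -
  interpret D: module R "dsum M J" by (rule dsum_module)
  have cF: "carrier (dsum M J) \<in> {N. submodule N R (dsum M J) \<and> rel_gens J \<subseteq> N}"
    using D.carrier_is_submodule rel_gens_closed by blast
  let ?F = "{N. submodule N R (dsum M J) \<and> rel_gens J \<subseteq> N}"
  show ?thesis unfolding dlim_rel_eq
  proof (rule D.submoduleI)
    show "\<Inter> ?F \<subseteq> carrier (dsum M J)" using cF by blast
    show "\<zero>\<^bsub>dsum M J\<^esub> \<in> \<Inter> ?F" using D.submodule_closed(2) by blast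
    show "\<And>a. a \<in> \<Inter> ?F \<Longrightarrow> \<ominus>\<^bsub>dsum M J\<^esub> a \<in> \<Inter> ?F" using D.submodule_closed(3) by blast
    show "\<And>a b. a \<in> \<Inter> ?F \<Longrightarrow> b \<in> \<Inter> ?F \<Longrightarrow> a \<oplus>\<^bsub>dsum M J\<^esub> b \<in> \<Inter> ?F" using D.submodule_closed(4) by blast
    show "\<And>r a. r \<in> carrier R \<Longrightarrow> a \<in> \<Inter> ?F \<Longrightarrow> r \<odot>\<^bsub>dsum M J\<^esub> a \<in> \<Inter> ?F" using D.submodule_closed(5) by blast
  qed
qed

lemma rel_gens_subset: "rel_gens J \<subseteq> dlim_rel R M J"
  unfolding dlim_rel_eq by blast

lemma dlim_rel_least: "submodule N R (dsum M J) \<Longrightarrow> rel_gens J \<subseteq> N \<Longrightarrow> dlim_rel R M J \<subseteq> N"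
  unfolding dlim_rel_eq by blast

lemma rel_gen_in_dlim_rel: "x \<in> J \<Longrightarrow> y \<in> J \<Longrightarrow> x \<le> y \<Longrightarrow> a \<in> carrier (fst M x) \<Longrightarrow>
   dsum_ins M J x a \<ominus>\<^bsub>dsum M J\<^esub> dsum_ins M J y (snd M x y a) \<in> dlim_rel R M J"
  using rel_gens_subset unfolding rel_gens_def by blast

lemma submodule_quot_dlim: "submodule_quot R (dsum M J) (dlim_rel R M J)"
  by (intro submodule_quot.intro submodule_quot_axioms.intro dsum_module dlim_rel_submodule)

lemma dlim_cls_eq: "dlim_cls R M J = quot_cls (dsum M J) (dlim_rel R M J)"
  by (intro ext) (simp add: dlim_cls_def quot_cls_def)

lemma dir_lim_eq: "dir_lim R M J = quot_mod (dsum M J) (dlim_rel R M J)"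
  by (simp add: dir_lim_def quot_mod_def dlim_cls_eq)

lemma dir_lim_module: "module R (dir_lim R M J)"
  unfolding dir_lim_eq by (rule submodule_quot.quot_mod_module[OF submodule_quot_dlim])

definition push_sum :: "'p set \<Rightarrow> 'p \<Rightarrow> ('p \<Rightarrow> 'm) \<Rightarrow> 'm" where
  "push_sum J z f = finsum (fst M z) (\<lambda>x. snd M x z (f x)) (supp J f)"

lemma supp_subset: "supp J f \<subseteq> J" by (auto simp: supp_def)

lemma push_terms_closed: assumes f: "f \<in> carrier (dsum M J)" and S: "S \<subseteq> J" "\<forall>x\<in>S. x \<le> z"
  shows "(\<lambda>x. snd M x z (f x)) \<in> S \<rightarrow> carrier (fst M z)"
proof (rule Pi_I)
  fix x assume "x \<in> S"
  then have "x \<in> J" "x \<le> z" using S by auto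
  then show "snd M x z (f x) \<in> carrier (fst M z)" using map_closed dsum_carrierD(1)[OF f] by blast
qed

lemma push_terms_closed_supp: assumes f: "f \<in> carrier (dsum M J)" and S: "supp J f \<subseteq> {x. x \<le> z}"
  shows "(\<lambda>x. snd M x z (f x)) \<in> supp J f \<rightarrow> carrier (fst M z)"
  by (rule push_terms_closed[OF f]) (use S supp_subset in auto)

lemma push_sum_superset:
  assumes f: "f \<in> carrier (dsum M J)" and S: "finite S" "supp J f \<subseteq> S" "S \<subseteq> J" "\<forall>x\<in>S. x \<le> z"
  shows "push_sum J z f = finsum (fst M z) (\<lambda>x. snd M x z (f x)) S"
proof -
  interpret Mz: abelian_monoid "fst M z" by (rule abelian_monoid_at)
  show ?thesis unfolding push_sum_def
  proof (rule Mz.add.finprod_mono_neutral_cong_left)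
    show "finite S" "supp J f \<subseteq> S" by (fact S)+
    fix i assume "i \<in> S - supp J f"
    then have "f i = \<zero>\<^bsub>fst M i\<^esub>" "i \<le> z" using S by (auto simp: supp_def)
    then show "snd M i z (f i) = \<zero>\<^bsub>fst M z\<^esub>" by (simp add: map_zero)
  next
    show "(\<lambda>x. snd M x z (f x)) \<in> S \<rightarrow> carrier (fst M z)"
      by (rule push_terms_closed[OF f]) (use S in auto)
  qed simp
qed

lemma push_sum_closed: "f \<in> carrier (dsum M J) \<Longrightarrow> supp J f \<subseteq> {x. x \<le> z} \<Longrightarrow> push_sum J z f \<in> carrier (fst M z)"
proof -
  assume f: "f \<in> carrier (dsum M J)" and s: "supp J f \<subseteq> {x. x \<le> z}"
  interpret Mz: abelian_monoid "fst M z" by (rule abelian_monoid_at)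
  show ?thesis unfolding push_sum_def
    by (rule Mz.finsum_closed) (rule push_terms_closed_supp[OF f s])
qed

lemma supp_add: "f \<in> carrier (dsum M J) \<Longrightarrow> g \<in> carrier (dsum M J) \<Longrightarrow>
   supp J (f \<oplus>\<^bsub>dsum M J\<^esub> g) \<subseteq> supp J f \<union> supp J g"
  by (auto simp: supp_def dsum_add abelian_monoid.l_zero[OF abelian_monoid_at] closed_at)

lemma supp_smult: "r \<in> carrier R \<Longrightarrow> supp J (r \<odot>\<^bsub>dsum M J\<^esub> f) \<subseteq> supp J f"
  by (auto simp: supp_def dsum_smult module.smult_r_null[OF module_at])

lemma supp_a_inv: "f \<in> carrier (dsum M J) \<Longrightarrow> supp J (\<ominus>\<^bsub>dsum M J\<^esub> f) \<subseteq> supp J f"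
  by (auto simp: supp_def dsum_a_inv a_inv_zero_at)

lemma push_sum_add:
  assumes f: "f \<in> carrier (dsum M J)" and g: "g \<in> carrier (dsum M J)"
    and sf: "supp J f \<subseteq> {x. x \<le> z}" and sg: "supp J g \<subseteq> {x. x \<le> z}"
  shows "push_sum J z (f \<oplus>\<^bsub>dsum M J\<^esub> g) = push_sum J z f \<oplus>\<^bsub>fst M z\<^esub> push_sum J z g"
proof -
  interpret Mz: abelian_monoid "fst M z" by (rule abelian_monoid_at)
  interpret D: module R "dsum M J" by (rule dsum_module)
  let ?S = "supp J f \<union> supp J g"
  have fin: "finite ?S" using dsum_carrierD(3) f g by blast
  have sub: "?S \<subseteq> J" "\<forall>x\<in>?S. x \<le> z" using sf sg supp_subset by blast+
  have "push_sum J z (f \<oplus>\<^bsub>dsum M J\<^esub> g) = finsum (fst M z) (\<lambda>x. snd M x z ((f \<oplus>\<^bsub>dsum M J\<^esub> g) x)) ?S"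
    by (rule push_sum_superset) (use f g fin sub supp_add[OF f g] in auto)
  also have "\<dots> = finsum (fst M z) (\<lambda>x. snd M x z (f x) \<oplus>\<^bsub>fst M z\<^esub> snd M x z (g x)) ?S"
    by (rule Mz.finsum_cong') (use sub f g in \<open>auto simp: dsum_add map_add dsum_carrierD closed_at\<close>)
  also have "\<dots> = finsum (fst M z) (\<lambda>x. snd M x z (f x)) ?S \<oplus>\<^bsub>fst M z\<^esub> finsum (fst M z) (\<lambda>x. snd M x z (g x)) ?S"
    by (rule Mz.finsum_addf) (use sub f g in \<open>auto simp: dsum_carrierD closed_at\<close>)
  also have "\<dots> = push_sum J z f \<oplus>\<^bsub>fst M z\<^esub> push_sum J z g"
    using push_sum_superset[OF f fin _ sub] push_sum_superset[OF g fin _ sub] by simp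
  finally show ?thesis .
qed

lemma push_sum_smult:
  assumes r: "r \<in> carrier R" and f: "f \<in> carrier (dsum M J)" and sf: "supp J f \<subseteq> {x. x \<le> z}"
  shows "push_sum J z (r \<odot>\<^bsub>dsum M J\<^esub> f) = r \<odot>\<^bsub>fst M z\<^esub> push_sum J z f"
proof -
  interpret Mz: module R "fst M z" by (rule module_at)
  interpret D: module R "dsum M J" by (rule dsum_module)
  let ?S = "supp J f"
  have fin: "finite ?S" using dsum_carrierD(3) f by blast
  have sub: "?S \<subseteq> J" "\<forall>x\<in>?S. x \<le> z" using sf supp_subset by blast+
  have "push_sum J z (r \<odot>\<^bsub>dsum M J\<^esub> f) = finsum (fst M z) (\<lambda>x. snd M x z ((r \<odot>\<^bsub>dsum M J\<^esub> f) x)) ?S"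
    by (rule push_sum_superset) (use f r fin sub supp_smult[OF r] in auto)
  also have "\<dots> = finsum (fst M z) (\<lambda>x. r \<odot>\<^bsub>fst M z\<^esub> snd M x z (f x)) ?S"
    by (rule Mz.finsum_cong') (use sub f r in \<open>auto simp: dsum_smult map_smult dsum_carrierD closed_at\<close>)
  also have "\<dots> = r \<odot>\<^bsub>fst M z\<^esub> push_sum J z f"
    unfolding push_sum_def by (rule Mz.finsum_smult_ldistr[symmetric]) (use sub f r fin in \<open>auto simp: dsum_carrierD closed_at\<close>)
  finally show ?thesis .
qed

lemma push_sum_a_inv:
  assumes f: "f \<in> carrier (dsum M J)" and sf: "supp J f \<subseteq> {x. x \<le> z}"
  shows "push_sum J z (\<ominus>\<^bsub>dsum M J\<^esub> f) = \<ominus>\<^bsub>fst M z\<^esub> push_sum J z f"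
proof -
  interpret Mz: module R "fst M z" by (rule module_at)
  interpret D: module R "dsum M J" by (rule dsum_module)
  have "\<ominus>\<^bsub>dsum M J\<^esub> f = (\<ominus>\<^bsub>R\<^esub> \<one>\<^bsub>R\<^esub>) \<odot>\<^bsub>dsum M J\<^esub> f" using f D.smult_l_minus[of "\<one>\<^bsub>R\<^esub>" f] by simp
  moreover have "\<ominus>\<^bsub>fst M z\<^esub> push_sum J z f = (\<ominus>\<^bsub>R\<^esub> \<one>\<^bsub>R\<^esub>) \<odot>\<^bsub>fst M z\<^esub> push_sum J z f"
    using push_sum_closed[OF f sf] Mz.smult_l_minus[of "\<one>\<^bsub>R\<^esub>"] by simp
  ultimately show ?thesis using push_sum_smult[OF _ f sf, of "\<ominus>\<^bsub>R\<^esub> \<one>\<^bsub>R\<^esub>"] by simp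
qed

lemma push_sum_minus:
  assumes f: "f \<in> carrier (dsum M J)" and g: "g \<in> carrier (dsum M J)"
    and sf: "supp J f \<subseteq> {x. x \<le> z}" and sg: "supp J g \<subseteq> {x. x \<le> z}"
  shows "push_sum J z (f \<ominus>\<^bsub>dsum M J\<^esub> g) = push_sum J z f \<ominus>\<^bsub>fst M z\<^esub> push_sum J z g"
proof -
  interpret Mz: module R "fst M z" by (rule module_at)
  interpret D: module R "dsum M J" by (rule dsum_module)
  have "push_sum J z (f \<ominus>\<^bsub>dsum M J\<^esub> g) = push_sum J z (f \<oplus>\<^bsub>dsum M J\<^esub> \<ominus>\<^bsub>dsum M J\<^esub> g)" by (simp add: D.minus_eq)
  also have "\<dots> = push_sum J z f \<oplus>\<^bsub>fst M z\<^esub> push_sum J z (\<ominus>\<^bsub>dsum M J\<^esub> g)"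
    by (rule push_sum_add) (use f g sf sg supp_a_inv[OF g] in auto)
  also have "\<dots> = push_sum J z f \<ominus>\<^bsub>fst M z\<^esub> push_sum J z g" by (simp add: push_sum_a_inv[OF g sg] Mz.minus_eq)
  finally show ?thesis .
qed

lemma map_push_sum:
  assumes f: "f \<in> carrier (dsum M J)" and sf: "supp J f \<subseteq> {x. x \<le> z}" and zz: "z \<le> z'"
  shows "snd M z z' (push_sum J z f) = push_sum J z' f"
proof -
  have fin: "finite (supp J f)" using dsum_carrierD(3) f by blast
  have "snd M z z' (push_sum J z f) = finsum (fst M z') (\<lambda>x. snd M z z' (snd M x z (f x))) (supp J f)"
    unfolding push_sum_def by (rule mod_hom_finsum[OF module_at module_at map_hom[OF zz] fin push_terms_closed_supp[OF f sf]])
  also have "\<dots> = push_sum J z' f" unfolding push_sum_def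
  proof (rule abelian_monoid.finsum_cong'[OF abelian_monoid_at refl])
    show "(\<lambda>x. snd M x z' (f x)) \<in> supp J f \<rightarrow> carrier (fst M z')"
      by (rule push_terms_closed_supp[OF f]) (use sf zz in auto)
    fix i assume i: "i \<in> supp J f"
    then have "i \<in> J" "i \<le> z" using sf supp_subset by auto
    then show "snd M z z' (snd M i z (f i)) = snd M i z' (f i)" using map_comp zz dsum_carrierD(1)[OF f] by blast
  qed
  finally show ?thesis .
qed

lemma push_sum_dsum_ins:
  assumes x: "x \<in> J" "x \<le> z" and a: "a \<in> carrier (fst M x)"
  shows "push_sum J z (dsum_ins M J x a) = snd M x z a"
proof -
  interpret Mz: abelian_monoid "fst M z" by (rule abelian_monoid_at)
  have "push_sum J z (dsum_ins M J x a) = finsum (fst M z) (\<lambda>y. snd M y z (dsum_ins M J x a y)) {x}"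
    by (rule push_sum_superset) (use x a supp_dsum_ins[OF x(1)] in \<open>auto intro: dsum_ins_closed\<close>)
  also have "\<dots> = snd M x z a" using x a by (simp add: dsum_ins_apply map_closed)
  finally show ?thesis .
qed

lemma supp_zero: "supp J \<zero>\<^bsub>dsum M J\<^esub> = {}"
  by (simp add: supp_def dsum_zero)

lemma push_sum_zero: "push_sum J z \<zero>\<^bsub>dsum M J\<^esub> = \<zero>\<^bsub>fst M z\<^esub>"
  by (simp add: push_sum_def supp_zero abelian_monoid.finsum_empty[OF abelian_monoid_at])

lemma supp_empty_imp_zero: "f \<in> carrier (dsum M J) \<Longrightarrow> supp J f = {} \<Longrightarrow> f = \<zero>\<^bsub>dsum M J\<^esub>"
  by (intro ext) (auto simp: supp_def dsum_zero dsum_carrierD)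

lemma dsum_remove_point:
  assumes f: "f \<in> carrier (dsum M J)" and x: "x \<in> J"
  shows "f(x := \<zero>\<^bsub>fst M x\<^esub>) \<in> carrier (dsum M J)"
    and "supp J (f(x := \<zero>\<^bsub>fst M x\<^esub>)) = supp J f - {x}"
    and "f = f(x := \<zero>\<^bsub>fst M x\<^esub>) \<oplus>\<^bsub>dsum M J\<^esub> dsum_ins M J x (f x)"
proof -
  show supp: "supp J (f(x := \<zero>\<^bsub>fst M x\<^esub>)) = supp J f - {x}" by (auto simp: supp_def)
  show "f(x := \<zero>\<^bsub>fst M x\<^esub>) \<in> carrier (dsum M J)"
    by (rule dsum_carrierI) (use f x dsum_carrierD(3)[OF f] in \<open>auto simp: supp dsum_carrierD closed_at\<close>)
  show "f = f(x := \<zero>\<^bsub>fst M x\<^esub>) \<oplus>\<^bsub>dsum M J\<^esub> dsum_ins M J x (f x)"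
    by (intro ext) (use f x in \<open>auto simp: dsum_add dsum_ins_apply dsum_carrierD
        abelian_monoid.r_zero[OF abelian_monoid_at] abelian_monoid.l_zero[OF abelian_monoid_at]\<close>)
qed

lemma finsum_collapse_in_dlim_rel:
  assumes z: "z \<in> J" and S: "finite S" "S \<subseteq> J" "\<forall>x\<in>S. x \<le> z"
  shows "\<forall>f. f \<in> carrier (dsum M J) \<longrightarrow> supp J f \<subseteq> S \<longrightarrow>
     f \<ominus>\<^bsub>dsum M J\<^esub> dsum_ins M J z (finsum (fst M z) (\<lambda>x. snd M x z (f x)) S) \<in> dlim_rel R M J"
  using S
proof (induction S rule: finite_induct)
  case empty
  interpret D: module R "dsum M J" by (rule dsum_module)
  show ?case
    using z supp_empty_imp_zero D.submodule_closed(2)[OF dlim_rel_submodule]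
    by (auto simp: dsum_ins_zero D.minus_self abelian_monoid.finsum_empty[OF abelian_monoid_at])
next
  case (insert x F)
  interpret D: module R "dsum M J" by (rule dsum_module)
  interpret Mz: abelian_monoid "fst M z" by (rule abelian_monoid_at)
  have xJ: "x \<in> J" "x \<le> z" and FJ: "F \<subseteq> J" "\<forall>y\<in>F. y \<le> z" using insert.prems by auto
  show ?case
  proof (intro allI impI)
    fix f assume f: "f \<in> carrier (dsum M J)" and sf: "supp J f \<subseteq> insert x F"
    define f' where "f' = f(x := \<zero>\<^bsub>fst M x\<^esub>)"
    note f' = dsum_remove_point[OF f xJ(1), folded f'_def]
    have a: "f x \<in> carrier (fst M x)" using dsum_carrierD(1)[OF f xJ(1)] .
    have b: "snd M x z (f x) \<in> carrier (fst M z)" using map_closed xJ a by blast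
    define s where "s = finsum (fst M z) (\<lambda>y. snd M y z (f' y)) F"
    have sc: "s \<in> carrier (fst M z)" unfolding s_def by (rule Mz.finsum_closed[OF push_terms_closed[OF f'(1) FJ]])
    have "finsum (fst M z) (\<lambda>y. snd M y z (f y)) F = s"
      unfolding s_def using insert.hyps push_terms_closed[OF f FJ]
      by (intro Mz.finsum_cong') (auto simp: f'_def)
    then have "finsum (fst M z) (\<lambda>y. snd M y z (f y)) (insert x F) = snd M x z (f x) \<oplus>\<^bsub>fst M z\<^esub> s"
      using insert.hyps push_terms_closed[OF f FJ] b by simp
    then have "f \<ominus>\<^bsub>dsum M J\<^esub> dsum_ins M J z (finsum (fst M z) (\<lambda>y. snd M y z (f y)) (insert x F))
       = (f' \<oplus>\<^bsub>dsum M J\<^esub> dsum_ins M J x (f x))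
           \<ominus>\<^bsub>dsum M J\<^esub> (dsum_ins M J z s \<oplus>\<^bsub>dsum M J\<^esub> dsum_ins M J z (snd M x z (f x)))"
      using f'(3) dsum_ins_add[OF z b sc] D.a_comm dsum_ins_closed z b sc by simp
    also have "\<dots> = (f' \<ominus>\<^bsub>dsum M J\<^esub> dsum_ins M J z s)
        \<oplus>\<^bsub>dsum M J\<^esub> (dsum_ins M J x (f x) \<ominus>\<^bsub>dsum M J\<^esub> dsum_ins M J z (snd M x z (f x)))"
      by (rule D.add_minus_add) (use f'(1) dsum_ins_closed xJ z a b sc in auto)
    also have "\<dots> \<in> dlim_rel R M J"
    proof (rule D.submodule_closed(4)[OF dlim_rel_submodule])
      show "f' \<ominus>\<^bsub>dsum M J\<^esub> dsum_ins M J z s \<in> dlim_rel R M J"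
        using insert.IH FJ f' sf unfolding s_def by blast
      show "dsum_ins M J x (f x) \<ominus>\<^bsub>dsum M J\<^esub> dsum_ins M J z (snd M x z (f x)) \<in> dlim_rel R M J"
        by (rule rel_gen_in_dlim_rel[OF xJ(1) z xJ(2) a])
    qed
    finally show "f \<ominus>\<^bsub>dsum M J\<^esub> dsum_ins M J z (finsum (fst M z) (\<lambda>y. snd M y z (f y)) (insert x F))
        \<in> dlim_rel R M J" .
  qed
qed

lemma collapse_in_dlim_rel:
  assumes f: "f \<in> carrier (dsum M J)" and z: "z \<in> J" and sf: "supp J f \<subseteq> {x. x \<le> z}"
  shows "f \<ominus>\<^bsub>dsum M J\<^esub> dsum_ins M J z (push_sum J z f) \<in> dlim_rel R M J"
  using finsum_collapse_in_dlim_rel[OF z dsum_carrierD(3)[OF f] supp_subset] sf f unfolding push_sum_def by blast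

lemma dlim_cls_collapse:
  assumes f: "f \<in> carrier (dsum M J)" and z: "z \<in> J" and sf: "supp J f \<subseteq> {x. x \<le> z}"
  shows "dlim_cls R M J f = dlim_cls R M J (dsum_ins M J z (push_sum J z f))"
  unfolding dlim_cls_eq using submodule_quot.quot_cls_eq_iff[OF submodule_quot_dlim f dsum_ins_closed[OF z push_sum_closed[OF f sf]]] collapse_in_dlim_rel[OF assms] by simp

lemma dlim_cls_dsum_ins_map:
  assumes "x \<in> J" "y \<in> J" "x \<le> y" "a \<in> carrier (fst M x)"
  shows "dlim_cls R M J (dsum_ins M J x a) = dlim_cls R M J (dsum_ins M J y (snd M x y a))"
  unfolding dlim_cls_eq using submodule_quot.quot_cls_eq_iff[OF submodule_quot_dlim dsum_ins_closed dsum_ins_closed] rel_gen_in_dlim_rel assms map_closed by simp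

lemma push_sum_zero_in_dlim_rel:
  assumes f: "f \<in> carrier (dsum M J)" and z: "z \<in> J" and sf: "supp J f \<subseteq> {x. x \<le> z}" and p: "push_sum J z f = \<zero>\<^bsub>fst M z\<^esub>"
  shows "f \<in> dlim_rel R M J"
proof -
  interpret D: module R "dsum M J" by (rule dsum_module)
  show ?thesis using collapse_in_dlim_rel[OF f z sf] by (simp add: p dsum_ins_zero z D.minus_zero_right f)
qed

definition push_null :: "'p set \<Rightarrow> ('p \<Rightarrow> 'm) set" where
  "push_null J = {f \<in> carrier (dsum M J). \<exists>z\<in>J. supp J f \<subseteq> {x. x \<le> z} \<and> push_sum J z f = \<zero>\<^bsub>fst M z\<^esub>}"

lemma push_null_submodule:
  assumes dJ: "directed J"
  shows "submodule (push_null J) R (dsum M J)"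
proof -
  interpret D: module R "dsum M J" by (rule dsum_module)
  show ?thesis
  proof (rule D.submoduleI)
    show "push_null J \<subseteq> carrier (dsum M J)" unfolding push_null_def by blast
  next
    obtain z where "z \<in> J" using dJ unfolding directed_def by blast
    then show "\<zero>\<^bsub>dsum M J\<^esub> \<in> push_null J" unfolding push_null_def by (auto simp: supp_zero push_sum_zero)
  next
    fix f assume "f \<in> push_null J"
    then obtain z where f: "f \<in> carrier (dsum M J)"
      and z: "z \<in> J" "supp J f \<subseteq> {x. x \<le> z}" "push_sum J z f = \<zero>\<^bsub>fst M z\<^esub>"
      unfolding push_null_def by blast
    show "\<ominus>\<^bsub>dsum M J\<^esub> f \<in> push_null J" unfolding push_null_def
      using f z supp_a_inv[OF f] push_sum_a_inv[OF f z(2)] by (auto simp: a_inv_zero_at)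
  next
    fix f g assume "f \<in> push_null J" "g \<in> push_null J"
    then obtain z1 z2 where f: "f \<in> carrier (dsum M J)"
      and z1: "z1 \<in> J" "supp J f \<subseteq> {x. x \<le> z1}" "push_sum J z1 f = \<zero>\<^bsub>fst M z1\<^esub>"
      and g: "g \<in> carrier (dsum M J)"
      and z2: "z2 \<in> J" "supp J g \<subseteq> {x. x \<le> z2}" "push_sum J z2 g = \<zero>\<^bsub>fst M z2\<^esub>"
      unfolding push_null_def by blast
    obtain z where z: "z \<in> J" "z1 \<le> z" "z2 \<le> z" using dJ z1(1) z2(1) unfolding directed_def by blast
    have sf: "supp J f \<subseteq> {x. x \<le> z}" and sg: "supp J g \<subseteq> {x. x \<le> z}"
      using z1 z2 z order_trans by blast+
    have "push_sum J z f = \<zero>\<^bsub>fst M z\<^esub>" "push_sum J z g = \<zero>\<^bsub>fst M z\<^esub>"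
      using map_push_sum[OF f z1(2) z(2)] map_push_sum[OF g z2(2) z(3)] z1(3) z2(3) map_zero z by simp_all
    then show "f \<oplus>\<^bsub>dsum M J\<^esub> g \<in> push_null J" unfolding push_null_def
      using f g z sf sg push_sum_add[OF f g sf sg] supp_add[OF f g]
      by (auto simp: abelian_monoid.l_zero[OF abelian_monoid_at] closed_at)
  next
    fix r f assume r: "r \<in> carrier R" and "f \<in> push_null J"
    then obtain z where f: "f \<in> carrier (dsum M J)"
      and z: "z \<in> J" "supp J f \<subseteq> {x. x \<le> z}" "push_sum J z f = \<zero>\<^bsub>fst M z\<^esub>"
      unfolding push_null_def by blast
    show "r \<odot>\<^bsub>dsum M J\<^esub> f \<in> push_null J" unfolding push_null_def
      using f z r supp_smult[OF r, of J f] push_sum_smult[OF r f z(2)]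
      by (auto simp: module.smult_r_null[OF module_at])
  qed
qed

lemma rel_gens_subset_push_null: "rel_gens J \<subseteq> push_null J"
proof
  interpret D: module R "dsum M J" by (rule dsum_module)
  fix g assume "g \<in> rel_gens J"
  then obtain x y a where g: "g = dsum_ins M J x a \<ominus>\<^bsub>dsum M J\<^esub> dsum_ins M J y (snd M x y a)"
    and xy: "x \<in> J" "y \<in> J" "x \<le> y" and a: "a \<in> carrier (fst M x)" unfolding rel_gens_def by blast
  have b: "snd M x y a \<in> carrier (fst M y)" using map_closed xy a by blast
  have i1: "dsum_ins M J x a \<in> carrier (dsum M J)" and i2: "dsum_ins M J y (snd M x y a) \<in> carrier (dsum M J)"
    using dsum_ins_closed xy a b by blast+
  have s1: "supp J (dsum_ins M J x a) \<subseteq> {x. x \<le> y}" using supp_dsum_ins[OF xy(1)] xy by auto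
  have s2: "supp J (dsum_ins M J y (snd M x y a)) \<subseteq> {x. x \<le> y}" using supp_dsum_ins[OF xy(2)] by auto
  have "supp J g \<subseteq> supp J (dsum_ins M J x a) \<union> supp J (\<ominus>\<^bsub>dsum M J\<^esub> dsum_ins M J y (snd M x y a))"
    unfolding g D.minus_eq using supp_add i1 i2 by simp
  then have sg: "supp J g \<subseteq> {x. x \<le> y}" using s1 s2 supp_a_inv[OF i2] by blast
  have "push_sum J y g = snd M x y a \<ominus>\<^bsub>fst M y\<^esub> snd M y y (snd M x y a)"
    unfolding g push_sum_minus[OF i1 i2 s1 s2] push_sum_dsum_ins[OF xy(1,3) a]
      push_sum_dsum_ins[OF xy(2) order_refl b] ..
  also have "\<dots> = \<zero>\<^bsub>fst M y\<^esub>" using b by (simp add: map_id abelian_group.minus_self[OF abelian_group_at])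
  finally show "g \<in> push_null J" unfolding push_null_def using g i1 i2 xy sg by auto
qed

lemma dlim_rel_iff: assumes dJ: "directed J"
  shows "f \<in> dlim_rel R M J \<longleftrightarrow> f \<in> carrier (dsum M J) \<and> (\<exists>z\<in>J. supp J f \<subseteq> {x. x \<le> z} \<and> push_sum J z f = \<zero>\<^bsub>fst M z\<^esub>)"
  using dlim_rel_least[OF push_null_submodule[OF dJ] rel_gens_subset_push_null] push_sum_zero_in_dlim_rel
  unfolding push_null_def by blast

end

section \<open>The lower module\<close>

context pers_module
begin

definition dsum_extend :: "'p \<Rightarrow> 'p \<Rightarrow> ('p \<Rightarrow> 'm) \<Rightarrow> ('p \<Rightarrow> 'm)" where
  "dsum_extend p q g = (\<lambda>x. if x \<lless> p then g x else if x \<lless> q then \<zero>\<^bsub>fst M x\<^esub> else undefined)"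

lemma fst_lower: "fst (lower R M) p = dir_lim R M {x. x \<lless> p}" by (simp add: lower_def)
lemma snd_lower: "snd (lower R M) p q A = dlim_cls R M {x. x \<lless> q} (dsum_extend p q (rep A))"
  by (simp add: lower_def dsum_extend_def)

lemma dsum_extend_hom: assumes pq: "p \<le> q"
  shows "mod_hom R (dsum M {x. x \<lless> p}) (dsum M {x. x \<lless> q}) (dsum_extend p q)"
proof -
  have sub: "\<And>x. x \<lless> p \<Longrightarrow> x \<lless> q" using pq way_below_le_trans by blast
  show ?thesis unfolding mod_hom_def
  proof (intro conjI ballI)
    fix g assume g: "g \<in> carrier (dsum M {x. x \<lless> p})"
    show "dsum_extend p q g \<in> carrier (dsum M {x. x \<lless> q})"
    proof (rule dsum_carrierI)
      have "supp {x. x \<lless> q} (dsum_extend p q g) \<subseteq> supp {x. x \<lless> p} g" by (auto simp: supp_def dsum_extend_def)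
      then show "finite (supp {x. x \<lless> q} (dsum_extend p q g))" using dsum_carrierD(3)[OF g] finite_subset by blast
    qed (use g sub in \<open>auto simp: dsum_extend_def dsum_carrierD closed_at\<close>)
  next
    fix f g assume f: "f \<in> carrier (dsum M {x. x \<lless> p})" and g: "g \<in> carrier (dsum M {x. x \<lless> p})"
    show "dsum_extend p q (f \<oplus>\<^bsub>dsum M {x. x \<lless> p}\<^esub> g) = dsum_extend p q f \<oplus>\<^bsub>dsum M {x. x \<lless> q}\<^esub> dsum_extend p q g"
      by (intro ext) (use sub in \<open>simp add: dsum_extend_def dsum_add abelian_monoid.l_zero[OF abelian_monoid_at] closed_at\<close>)
  next
    fix r g assume r: "r \<in> carrier R" and g: "g \<in> carrier (dsum M {x. x \<lless> p})"
    show "dsum_extend p q (r \<odot>\<^bsub>dsum M {x. x \<lless> p}\<^esub> g) = r \<odot>\<^bsub>dsum M {x. x \<lless> q}\<^esub> dsum_extend p q g"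
      by (intro ext) (use sub r in \<open>simp add: dsum_extend_def dsum_smult module.smult_r_null[OF module_at]\<close>)
  qed
qed

lemma dsum_extend_ins: "x \<lless> p \<Longrightarrow> p \<le> q \<Longrightarrow> dsum_extend p q (dsum_ins M {x. x \<lless> p} x a) = dsum_ins M {x. x \<lless> q} x a"
  by (intro ext) (auto simp: dsum_extend_def dsum_ins_apply dest: way_below_le_trans)

lemma dsum_extend_id: "g \<in> carrier (dsum M {x. x \<lless> p}) \<Longrightarrow> dsum_extend p p g = g"
  by (intro ext) (simp add: dsum_extend_def dsum_carrierD)

lemma dsum_extend_comp: "p \<le> q \<Longrightarrow> q \<le> r \<Longrightarrow> dsum_extend q r (dsum_extend p q g) = dsum_extend p r g"
  by (intro ext) (auto simp: dsum_extend_def dest: way_below_le_trans)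

lemma dsum_extend_rel: assumes pq: "p \<le> q" and f: "f \<in> dlim_rel R M {x. x \<lless> p}"
  shows "dsum_extend p q f \<in> dlim_rel R M {x. x \<lless> q}"
proof -
  let ?P = "{f \<in> carrier (dsum M {x. x \<lless> p}). dsum_extend p q f \<in> dlim_rel R M {x. x \<lless> q}}"
  have "dlim_rel R M {x. x \<lless> p} \<subseteq> ?P"
  proof (rule dlim_rel_least)
    show "submodule ?P R (dsum M {x. x \<lless> p})"
      by (rule submodule_preimage[OF dsum_module dsum_module dsum_extend_hom[OF pq] dlim_rel_submodule])
    show "rel_gens {x. x \<lless> p} \<subseteq> ?P"
    proof
      fix g assume "g \<in> rel_gens {x. x \<lless> p}"
      then obtain x y a where g: "g = dsum_ins M {x. x \<lless> p} x a \<ominus>\<^bsub>dsum M {x. x \<lless> p}\<^esub> dsum_ins M {x. x \<lless> p} y (snd M x y a)"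
        and xy: "x \<lless> p" "y \<lless> p" "x \<le> y" and a: "a \<in> carrier (fst M x)" unfolding rel_gens_def by blast
      have b: "snd M x y a \<in> carrier (fst M y)" using map_closed xy a by blast
      have gc: "g \<in> carrier (dsum M {x. x \<lless> p})" using rel_gens_closed \<open>g \<in> rel_gens {x. x \<lless> p}\<close> by blast
      have "dsum_extend p q g = dsum_ins M {x. x \<lless> q} x a \<ominus>\<^bsub>dsum M {x. x \<lless> q}\<^esub> dsum_ins M {x. x \<lless> q} y (snd M x y a)"
        unfolding g by (simp add: mod_hom_minus[OF dsum_module dsum_module dsum_extend_hom[OF pq]] dsum_ins_closed xy a b dsum_extend_ins pq)
      also have "\<dots> \<in> dlim_rel R M {x. x \<lless> q}"
        by (rule rel_gen_in_dlim_rel) (use xy a pq way_below_le_trans in auto)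
      finally show "g \<in> ?P" using gc by blast
    qed
  qed
  then show ?thesis using f by blast
qed

lemma mod_hom_snd_lower:
  assumes "p \<le> q"
  shows "mod_hom R (fst (lower R M) p) (fst (lower R M) q) (snd (lower R M) p q)"
proof -
  have "snd (lower R M) p q =
      (\<lambda>A. quot_cls (dsum M {x. x \<lless> q}) (dlim_rel R M {x. x \<lless> q}) (dsum_extend p q (rep A)))"
    by (intro ext) (simp add: snd_lower dlim_cls_eq)
  then show ?thesis
    unfolding fst_lower dir_lim_eq
    using submodule_quot.mod_hom_induced[OF submodule_quot_dlim submodule_quot_dlim
        dsum_extend_hom[OF assms] dsum_extend_rel[OF assms]] by simp
qed

lemma snd_lower_dlim_cls:
  assumes "p \<le> q" "f \<in> carrier (dsum M {x. x \<lless> p})"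
  shows "snd (lower R M) p q (dlim_cls R M {x. x \<lless> p} f) = dlim_cls R M {x. x \<lless> q} (dsum_extend p q f)"
  unfolding snd_lower dlim_cls_eq
  by (rule submodule_quot.induced_rep_quot_cls[OF submodule_quot_dlim submodule_quot_dlim
        dsum_extend_hom[OF assms(1)] dsum_extend_rel[OF assms(1)] assms(2)])

lemma lower_carrierD:
  "A \<in> carrier (fst (lower R M) p) \<Longrightarrow>
   rep A \<in> carrier (dsum M {x. x \<lless> p}) \<and> dlim_cls R M {x. x \<lless> p} (rep A) = A"
  unfolding fst_lower dir_lim_eq dlim_cls_eq
  using submodule_quot.rep_in_quot_mod[OF submodule_quot_dlim] by blast

lemma dlim_cls_in_lower:
  "f \<in> carrier (dsum M {x. x \<lless> p}) \<Longrightarrow> dlim_cls R M {x. x \<lless> p} f \<in> carrier (fst (lower R M) p)"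
  unfolding fst_lower dir_lim_eq dlim_cls_eq
  using submodule_quot.quot_cls_closed[OF submodule_quot_dlim] by blast

lemma pers_mod_lower: "pers_mod R (lower R M)"
  unfolding pers_mod_def
proof (intro conjI allI impI ballI)
  fix p show "module R (fst (lower R M) p)" unfolding fst_lower by (rule dir_lim_module)
next
  fix p q :: 'p assume "p \<le> q"
  then show "mod_hom R (fst (lower R M) p) (fst (lower R M) q) (snd (lower R M) p q)"
    by (rule mod_hom_snd_lower)
next
  fix p and A assume A: "A \<in> carrier (fst (lower R M) p)"
  then show "snd (lower R M) p p A = A" using lower_carrierD[OF A] by (simp add: snd_lower dsum_extend_id)
next
  fix p q r :: 'p and A assume pq: "p \<le> q" and qr: "q \<le> r" and A: "A \<in> carrier (fst (lower R M) p)"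
  have rA: "rep A \<in> carrier (dsum M {x. x \<lless> p})" using lower_carrierD[OF A] by blast
  have "snd (lower R M) q r (snd (lower R M) p q A) =
      snd (lower R M) q r (dlim_cls R M {x. x \<lless> q} (dsum_extend p q (rep A)))"
    by (simp add: snd_lower)
  also have "\<dots> = dlim_cls R M {x. x \<lless> r} (dsum_extend q r (dsum_extend p q (rep A)))"
    by (rule snd_lower_dlim_cls[OF qr mod_hom_closed[OF dsum_extend_hom[OF pq] rA]])
  also have "\<dots> = snd (lower R M) p r A" by (simp add: snd_lower dsum_extend_comp[OF pq qr])
  finally show "snd (lower R M) q r (snd (lower R M) p q A) = snd (lower R M) p r A" .
qed

lemma pers_module_lower: "pers_module R (lower R M)"
  by (rule pers_module.intro[OF cR pers_mod_lower])

lemma lower_counit_eq: "lower_counit R M p A = push_sum {x. x \<lless> p} p (rep A)"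
  by (simp add: lower_counit_def push_sum_def supp_def)

lemma mod_hom_push_sum:
  assumes "\<forall>x\<in>J. x \<le> z"
  shows "mod_hom R (dsum M J) (fst M z) (push_sum J z)"
proof -
  have "\<And>f. supp J f \<subseteq> {x. x \<le> z}" using assms supp_subset by blast
  then show ?thesis unfolding mod_hom_def using push_sum_closed push_sum_add push_sum_smult by blast
qed

lemma push_sum_dlim_rel:
  assumes "directed J" "\<forall>x\<in>J. x \<le> z" "f \<in> dlim_rel R M J"
  shows "push_sum J z f = \<zero>\<^bsub>fst M z\<^esub>"
proof -
  obtain w where f: "f \<in> carrier (dsum M J)"
    and w: "w \<in> J" "supp J f \<subseteq> {x. x \<le> w}" "push_sum J w f = \<zero>\<^bsub>fst M w\<^esub>"
    using dlim_rel_iff[OF assms(1)] assms(3) by blast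
  have "push_sum J z f = snd M w z (push_sum J w f)" using map_push_sum[OF f w(2)] assms(2) w(1) by simp
  then show ?thesis using w(3) map_zero assms(2) w(1) by simp
qed

definition lower_ins :: "'p \<Rightarrow> 'p \<Rightarrow> 'm \<Rightarrow> ('p \<Rightarrow> 'm) set" where
  "lower_ins x y a = dlim_cls R M {w. w \<lless> y} (dsum_ins M {w. w \<lless> y} x a)"

lemma lower_ins_closed: "x \<lless> y \<Longrightarrow> a \<in> carrier (fst M x) \<Longrightarrow> lower_ins x y a \<in> carrier (fst (lower R M) y)"
  unfolding lower_ins_def by (rule dlim_cls_in_lower[OF dsum_ins_closed]) auto

lemma snd_lower_lower_ins:
  assumes "x \<lless> z" "z \<le> y" "a \<in> carrier (fst M x)"
  shows "snd (lower R M) z y (lower_ins x z a) = lower_ins x y a"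
  using snd_lower_dlim_cls[OF assms(2) dsum_ins_closed] dsum_extend_ins[OF assms(1,2)] assms
  by (simp add: lower_ins_def)

lemma push_sum_dsum_extend:
  assumes xy: "x \<le> y" and g: "g \<in> carrier (dsum M {w. w \<lless> x})" and t: "supp {w. w \<lless> x} g \<subseteq> {w. w \<le> t}"
  shows "push_sum {w. w \<lless> y} t (dsum_extend x y g) = push_sum {w. w \<lless> x} t g"
proof -
  have sub: "\<And>w. w \<lless> x \<Longrightarrow> w \<lless> y" using xy way_below_le_trans by blast
  have s: "supp {w. w \<lless> y} (dsum_extend x y g) = supp {w. w \<lless> x} g"
    by (auto simp: supp_def dsum_extend_def sub)
  show ?thesis unfolding push_sum_def s
  proof (rule abelian_monoid.finsum_cong'[OF abelian_monoid_at refl])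
    show "(\<lambda>w. snd M w t (g w)) \<in> supp {w. w \<lless> x} g \<rightarrow> carrier (fst M t)"
      by (rule push_terms_closed_supp[OF g t])
    fix i assume "i \<in> supp {w. w \<lless> x} g"
    then show "snd M i t (dsum_extend x y g i) = snd M i t (g i)" by (simp add: supp_def dsum_extend_def)
  qed
qed

lemma supp_way_below: "supp {w. w \<lless> x} g \<subseteq> {w. w \<le> x}"
  using supp_subset way_below_imp_le by blast

end

locale cont_pers_module = pers_module R M for R :: "'k ring" and M :: "('p::order, 'k, 'm) pmod" +
  assumes cont: "continuous_poset TYPE('p)"
begin

lemma cont_pers_module_lower: "cont_pers_module R (lower R M)"
  by (intro cont_pers_module.intro pers_module.intro cont_pers_module_axioms.intro cR pers_mod_lower cont)

lemma below_way_below: "\<forall>x\<in>{x. x \<lless> p}. x \<le> p"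
  using way_below_imp_le by blast

lemma mod_hom_lower_counit: "mod_hom R (fst (lower R M) p) (fst M p) (lower_counit R M p)"
proof -
  have "lower_counit R M p = (\<lambda>A. push_sum {x. x \<lless> p} p (rep A))"
    by (intro ext) (simp add: lower_counit_eq)
  then show ?thesis
    unfolding fst_lower dir_lim_eq
    using submodule_quot.mod_hom_lift[OF submodule_quot_dlim module_at mod_hom_push_sum[OF below_way_below]
        push_sum_dlim_rel[OF directed_way_below[OF cont] below_way_below]] by simp
qed

lemma lower_counit_dlim_cls:
  assumes "f \<in> carrier (dsum M {x. x \<lless> p})"
  shows "lower_counit R M p (dlim_cls R M {x. x \<lless> p} f) = push_sum {x. x \<lless> p} p f"
  unfolding lower_counit_eq dlim_cls_eq
  by (rule submodule_quot.lift_rep_quot_cls[OF submodule_quot_dlim module_at mod_hom_push_sum[OF below_way_below]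
        push_sum_dlim_rel[OF directed_way_below[OF cont] below_way_below] assms])

end

lemma is_pm_iso_cong:
  assumes A: "pers_module R A" and iso: "is_pm_iso R A B eta"
    and eq: "\<And>p a. a \<in> carrier (fst A p) \<Longrightarrow> eta' p a = eta p a"
  shows "is_pm_iso R A B eta'"
  using iso pers_module.map_closed[OF A] unfolding is_pm_iso_def
  by (auto simp: eq intro: mod_hom_cong[OF pers_module.module_at[OF A]] bij_betw_cong[THEN iffD2])

lemma is_pm_iso_inv:
  assumes A: "pers_module R A" and iso: "is_pm_iso R A B eta"
  shows "is_pm_iso R B A (\<lambda>p. inv_into (carrier (fst A p)) (eta p))"
  unfolding is_pm_iso_def
proof (intro conjI allI impI ballI)
  fix p
  have h: "mod_hom R (fst A p) (fst B p) (eta p)" and b: "bij_betw (eta p) (carrier (fst A p)) (carrier (fst B p))"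
    using iso unfolding is_pm_iso_def by blast+
  show "mod_hom R (fst B p) (fst A p) (inv_into (carrier (fst A p)) (eta p))"
    by (rule mod_hom_inv_into[OF pers_module.module_at[OF A] h b])
  show "bij_betw (inv_into (carrier (fst A p)) (eta p)) (carrier (fst B p)) (carrier (fst A p))"
    by (rule bij_betw_inv_into[OF b])
next
  fix p q y assume pq: "p \<le> q" and y: "y \<in> carrier (fst B p)"
  have bp: "bij_betw (eta p) (carrier (fst A p)) (carrier (fst B p))"
    and bq: "bij_betw (eta q) (carrier (fst A q)) (carrier (fst B q))"
    and nat: "\<And>a. a \<in> carrier (fst A p) \<Longrightarrow> eta q (snd A p q a) = snd B p q (eta p a)"
    using iso pq unfolding is_pm_iso_def by blast+
  define a where "a = inv_into (carrier (fst A p)) (eta p) y"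
  have a: "a \<in> carrier (fst A p)" "eta p a = y"
    using bp y unfolding a_def bij_betw_def by (auto simp: inv_into_into f_inv_into_f)
  have "inv_into (carrier (fst A q)) (eta q) (eta q (snd A p q a)) = snd A p q a"
    using bq pers_module.map_closed[OF A pq a(1)] by (simp add: bij_betw_def)
  then show "inv_into (carrier (fst A q)) (eta q) (snd B p q y) = snd A p q a"
    using nat[OF a(1)] a(2) by simp
qed

section \<open>Morphisms that are invertible up to way-below\<close>

locale iso_up_to_way_below = A: cont_pers_module R A + B: pers_module R B
  for R :: "'k ring" and A :: "('p::order, 'k, 'a) pmod" and B :: "('p, 'k, 'b) pmod" +
  fixes phi :: "'p \<Rightarrow> 'a \<Rightarrow> 'b" and psi :: "'p \<Rightarrow> 'p \<Rightarrow> 'b \<Rightarrow> 'a"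
  assumes phi_hom: "mod_hom R (fst A x) (fst B x) (phi x)"
    and phi_nat: "x \<le> y \<Longrightarrow> a \<in> carrier (fst A x) \<Longrightarrow> phi y (snd A x y a) = snd B x y (phi x a)"
    and psi_closed: "x \<lless> y \<Longrightarrow> b \<in> carrier (fst B x) \<Longrightarrow> psi x y b \<in> carrier (fst A y)"
    and psi_phi: "x \<lless> y \<Longrightarrow> a \<in> carrier (fst A x) \<Longrightarrow> psi x y (phi x a) = snd A x y a"
    and phi_psi: "x \<lless> y \<Longrightarrow> b \<in> carrier (fst B x) \<Longrightarrow> phi y (psi x y b) = snd B x y b"
    and psi_nat: "x \<lless> z \<Longrightarrow> z \<le> y \<Longrightarrow> b \<in> carrier (fst B x) \<Longrightarrow> snd A z y (psi x z b) = psi x y b"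
begin

lemma phi_closed: "a \<in> carrier (fst A x) \<Longrightarrow> phi x a \<in> carrier (fst B x)"
  by (rule mod_hom_closed[OF phi_hom])

lemma phi_zero: "phi x \<zero>\<^bsub>fst A x\<^esub> = \<zero>\<^bsub>fst B x\<^esub>"
  by (rule mod_hom_zero[OF A.module_at B.module_at phi_hom])

definition upper_map :: "'p \<Rightarrow> ('p \<Rightarrow> 'a) \<Rightarrow> ('p \<Rightarrow> 'b)" where
  "upper_map p f = (\<lambda>x. if p \<lless> x then phi x (f x) else undefined)"

lemma upper_map_closed: assumes f: "f \<in> carrier (fst (upper A) p)" shows "upper_map p f \<in> carrier (fst (upper B) p)"
  unfolding B.upper_carrier
proof (intro conjI allI impI)
  fix x assume "p \<lless> x" then show "upper_map p f x \<in> carrier (fst B x)"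
    using f phi_closed by (simp add: A.upper_carrier upper_map_def)
next
  fix x assume "\<not> p \<lless> x" then show "upper_map p f x = undefined" by (simp add: upper_map_def)
next
  fix x y assume xy: "p \<lless> x" "p \<lless> y" "x \<le> y"
  have fx: "f x \<in> carrier (fst A x)" and fy: "snd A x y (f x) = f y" using f xy by (auto simp: A.upper_carrier)
  show "snd B x y (upper_map p f x) = upper_map p f y" using xy phi_nat[OF xy(3) fx] fy by (simp add: upper_map_def)
qed

lemma mod_hom_upper_map: "mod_hom R (fst (upper A) p) (fst (upper B) p) (upper_map p)"
  unfolding mod_hom_def
proof (intro conjI ballI)
  fix f assume "f \<in> carrier (fst (upper A) p)" then show "upper_map p f \<in> carrier (fst (upper B) p)" by (rule upper_map_closed)
next
  fix f g assume f: "f \<in> carrier (fst (upper A) p)" and g: "g \<in> carrier (fst (upper A) p)"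
  show "upper_map p (f \<oplus>\<^bsub>fst (upper A) p\<^esub> g) = upper_map p f \<oplus>\<^bsub>fst (upper B) p\<^esub> upper_map p g"
  proof (rule ext)
    fix x show "upper_map p (f \<oplus>\<^bsub>fst (upper A) p\<^esub> g) x = (upper_map p f \<oplus>\<^bsub>fst (upper B) p\<^esub> upper_map p g) x"
      using f g by (simp add: upper_map_def A.fst_upper B.fst_upper A.inv_lim_add B.inv_lim_add A.inv_lim_carrier mod_hom_add[OF phi_hom])
  qed
next
  fix r f assume r: "r \<in> carrier R" and f: "f \<in> carrier (fst (upper A) p)"
  show "upper_map p (r \<odot>\<^bsub>fst (upper A) p\<^esub> f) = r \<odot>\<^bsub>fst (upper B) p\<^esub> upper_map p f"
  proof (rule ext)
    fix x show "upper_map p (r \<odot>\<^bsub>fst (upper A) p\<^esub> f) x = (r \<odot>\<^bsub>fst (upper B) p\<^esub> upper_map p f) x"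
      using f r by (simp add: upper_map_def A.fst_upper B.fst_upper A.inv_lim_smult B.inv_lim_smult A.inv_lim_carrier mod_hom_smult[OF phi_hom])
  qed
qed

lemma inj_on_upper_map: "inj_on (upper_map p) (carrier (fst (upper A) p))"
proof (rule inj_onI)
  fix f f' assume f: "f \<in> carrier (fst (upper A) p)" and f': "f' \<in> carrier (fst (upper A) p)" and e: "upper_map p f = upper_map p f'"
  show "f = f'"
  proof (rule ext)
    fix y show "f y = f' y"
    proof (cases "p \<lless> y")
      case True
      then obtain x where x: "p \<lless> x" "x \<lless> y" using way_below_interpolation[OF A.cont] by blast
      have xy: "x \<le> y" using x way_below_imp_le by blast
      have "f y = snd A x y (f x)" using f x True xy by (simp add: A.upper_carrier)
      also have "\<dots> = psi x y (phi x (f x))" using psi_phi[OF x(2)] f x by (simp add: A.upper_carrier)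
      also have "phi x (f x) = phi x (f' x)" using fun_cong[OF e, of x] x by (simp add: upper_map_def)
      also have "psi x y (phi x (f' x)) = snd A x y (f' x)" using psi_phi[OF x(2)] f' x by (simp add: A.upper_carrier)
      also have "\<dots> = f' y" using f' x True xy by (simp add: A.upper_carrier)
      finally show ?thesis .
    next
      case False then show ?thesis using f f' by (simp add: A.upper_carrier)
    qed
  qed
qed

lemma psi_upper_step:
  assumes g: "g \<in> carrier (fst (upper B) p)" and px: "p \<lless> x" and xz: "x \<lless> z" and zy: "z \<lless> y"
  shows "psi x y (g x) = psi z y (g z)"
proof -
  have pz: "p \<lless> z" using px xz way_below_trans by blast
  have gx: "g x \<in> carrier (fst B x)" using g px by (simp add: B.upper_carrier)
  have c: "psi x z (g x) \<in> carrier (fst A z)" using psi_closed[OF xz gx] .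
  have "psi x y (g x) = snd A z y (psi x z (g x))" using psi_nat[OF xz way_below_imp_le[OF zy] gx] by simp
  also have "\<dots> = psi z y (phi z (psi x z (g x)))" using psi_phi[OF zy c] by simp
  also have "\<dots> = psi z y (snd B x z (g x))" using phi_psi[OF xz gx] by simp
  also have "\<dots> = psi z y (g z)" using g px pz way_below_imp_le[OF xz] by (simp add: B.upper_carrier)
  finally show ?thesis .
qed

lemma psi_upper_independent:
  assumes g: "g \<in> carrier (fst (upper B) p)"
    and "p \<lless> x1" "x1 \<lless> y" "p \<lless> x2" "x2 \<lless> y"
  shows "psi x1 y (g x1) = psi x2 y (g x2)"
proof -
  obtain z where "x1 \<lless> z" "x2 \<lless> z" "z \<lless> y"
    using way_below_interpolation2[OF A.cont assms(3,5)] by blast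
  then show ?thesis using psi_upper_step[OF g] assms by metis
qed

lemma upper_map_surj:
  assumes g: "g \<in> carrier (fst (upper B) p)"
  shows "\<exists>f\<in>carrier (fst (upper A) p). upper_map p f = g"
proof -
  have gc: "\<And>x. p \<lless> x \<Longrightarrow> g x \<in> carrier (fst B x)" and gu: "\<And>x. \<not> p \<lless> x \<Longrightarrow> g x = undefined"
    and gn: "\<And>x y. p \<lless> x \<Longrightarrow> p \<lless> y \<Longrightarrow> x \<le> y \<Longrightarrow> snd B x y (g x) = g y"
    using g by (simp_all add: B.upper_carrier)
  define c where "c y = (SOME x. p \<lless> x \<and> x \<lless> y)" for y
  have cy: "\<And>y. p \<lless> y \<Longrightarrow> p \<lless> c y \<and> c y \<lless> y"
    unfolding c_def by (rule someI_ex) (rule way_below_interpolation[OF A.cont])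
  define f where "f y = (if p \<lless> y then psi (c y) y (g (c y)) else undefined)" for y
  have fwd: "\<And>x y. p \<lless> x \<Longrightarrow> x \<lless> y \<Longrightarrow> f y = psi x y (g x)"
  proof -
    fix x y assume "p \<lless> x" "x \<lless> y"
    moreover then have "p \<lless> y" using way_below_trans by blast
    ultimately show "f y = psi x y (g x)" using psi_upper_independent[OF g] cy unfolding f_def by metis
  qed
  have fc: "f \<in> carrier (fst (upper A) p)" unfolding A.upper_carrier
  proof (intro conjI allI impI)
    fix x assume "p \<lless> x" then show "f x \<in> carrier (fst A x)"
      using cy psi_closed gc unfolding f_def by auto
  next
    fix x assume "\<not> p \<lless> x" then show "f x = undefined" unfolding f_def by simp
  next
    fix x y assume xy: "p \<lless> x" "p \<lless> y" "x \<le> y"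
    have c: "p \<lless> c x" "c x \<lless> x" using cy xy by auto
    have "snd A x y (f x) = snd A x y (psi (c x) x (g (c x)))" using xy unfolding f_def by simp
    also have "\<dots> = psi (c x) y (g (c x))" using psi_nat[OF c(2) xy(3) gc[OF c(1)]] .
    also have "\<dots> = f y" using fwd[OF c(1)] c(2) xy(3) way_below_le_trans by metis
    finally show "snd A x y (f x) = f y" .
  qed
  have "upper_map p f = g"
  proof (rule ext)
    fix x show "upper_map p f x = g x"
    proof (cases "p \<lless> x")
      case True
      then have c: "p \<lless> c x" "c x \<lless> x" using cy by auto
      have "upper_map p f x = phi x (psi (c x) x (g (c x)))" using True by (simp add: upper_map_def f_def)
      also have "\<dots> = snd B (c x) x (g (c x))" using phi_psi[OF c(2) gc[OF c(1)]] .
      also have "\<dots> = g x" using gn[OF c(1) True way_below_imp_le[OF c(2)]] .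
      finally show ?thesis .
    next
      case False then show ?thesis by (simp add: upper_map_def gu)
    qed
  qed
  then show ?thesis using fc by blast
qed

lemma upper_iso: "is_pm_iso R (upper A) (upper B) upper_map"
  unfolding is_pm_iso_def
proof (intro conjI allI impI ballI)
  fix p
  show "mod_hom R (fst (upper A) p) (fst (upper B) p) (upper_map p)" by (rule mod_hom_upper_map)
  show "bij_betw (upper_map p) (carrier (fst (upper A) p)) (carrier (fst (upper B) p))"
    unfolding bij_betw_def using inj_on_upper_map upper_map_closed upper_map_surj by blast
next
  fix p q f assume pq: "p \<le> q" and f: "f \<in> carrier (fst (upper A) p)"
  have sub: "\<And>x. q \<lless> x \<Longrightarrow> p \<lless> x" using pq le_way_below_trans by blast
  show "upper_map q (snd (upper A) p q f) = snd (upper B) p q (upper_map p f)"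
    by (intro ext) (simp add: upper_map_def A.snd_upper B.snd_upper sub)
qed

definition dsum_map :: "'p \<Rightarrow> ('p \<Rightarrow> 'a) \<Rightarrow> ('p \<Rightarrow> 'b)" where
  "dsum_map p g = (\<lambda>x. if x \<lless> p then phi x (g x) else undefined)"

definition lower_map :: "'p \<Rightarrow> ('p \<Rightarrow> 'a) set \<Rightarrow> ('p \<Rightarrow> 'b) set" where
  "lower_map p X = dlim_cls R B {x. x \<lless> p} (dsum_map p (rep X))"

lemma supp_dsum_map: "g \<in> carrier (dsum A {x. x \<lless> p}) \<Longrightarrow> B.supp {x. x \<lless> p} (dsum_map p g) \<subseteq> A.supp {x. x \<lless> p} g"
  by (auto simp: B.supp_def A.supp_def dsum_map_def phi_zero)

lemma mod_hom_dsum_map: "mod_hom R (dsum A {x. x \<lless> p}) (dsum B {x. x \<lless> p}) (dsum_map p)"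
  unfolding mod_hom_def
proof (intro conjI ballI)
  fix g assume g: "g \<in> carrier (dsum A {x. x \<lless> p})"
  show "dsum_map p g \<in> carrier (dsum B {x. x \<lless> p})"
  proof (rule B.dsum_carrierI)
    show "finite (B.supp {x. x \<lless> p} (dsum_map p g))"
      using supp_dsum_map[OF g] A.dsum_carrierD(3)[OF g] finite_subset by blast
  qed (use g in \<open>auto simp: dsum_map_def A.dsum_carrierD phi_closed\<close>)
next
  fix f g assume f: "f \<in> carrier (dsum A {x. x \<lless> p})" and g: "g \<in> carrier (dsum A {x. x \<lless> p})"
  show "dsum_map p (f \<oplus>\<^bsub>dsum A {x. x \<lless> p}\<^esub> g) = dsum_map p f \<oplus>\<^bsub>dsum B {x. x \<lless> p}\<^esub> dsum_map p g"
    by (intro ext) (use f g in \<open>simp add: dsum_map_def A.dsum_add B.dsum_add A.dsum_carrierD mod_hom_add[OF phi_hom]\<close>)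
next
  fix r g assume r: "r \<in> carrier R" and g: "g \<in> carrier (dsum A {x. x \<lless> p})"
  show "dsum_map p (r \<odot>\<^bsub>dsum A {x. x \<lless> p}\<^esub> g) = r \<odot>\<^bsub>dsum B {x. x \<lless> p}\<^esub> dsum_map p g"
    by (intro ext) (use r g in \<open>simp add: dsum_map_def A.dsum_smult B.dsum_smult A.dsum_carrierD mod_hom_smult[OF phi_hom]\<close>)
qed

lemma dsum_map_ins: "x \<lless> p \<Longrightarrow> dsum_map p (dsum_ins A {x. x \<lless> p} x a) = dsum_ins B {x. x \<lless> p} x (phi x a)"
  by (intro ext) (simp add: dsum_map_def A.dsum_ins_apply B.dsum_ins_apply phi_zero)

lemma dsum_map_rel: assumes f: "f \<in> dlim_rel R A {x. x \<lless> p}"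
  shows "dsum_map p f \<in> dlim_rel R B {x. x \<lless> p}"
proof -
  let ?P = "{f \<in> carrier (dsum A {x. x \<lless> p}). dsum_map p f \<in> dlim_rel R B {x. x \<lless> p}}"
  have "dlim_rel R A {x. x \<lless> p} \<subseteq> ?P"
  proof (rule A.dlim_rel_least)
    show "submodule ?P R (dsum A {x. x \<lless> p})"
      by (rule submodule_preimage[OF A.dsum_module B.dsum_module mod_hom_dsum_map B.dlim_rel_submodule])
    show "A.rel_gens {x. x \<lless> p} \<subseteq> ?P"
    proof
      fix g assume gg: "g \<in> A.rel_gens {x. x \<lless> p}"
      then obtain x y a where g: "g = dsum_ins A {x. x \<lless> p} x a \<ominus>\<^bsub>dsum A {x. x \<lless> p}\<^esub> dsum_ins A {x. x \<lless> p} y (snd A x y a)"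
        and xy: "x \<lless> p" "y \<lless> p" "x \<le> y" and a: "a \<in> carrier (fst A x)" unfolding A.rel_gens_def by blast
      have b: "snd A x y a \<in> carrier (fst A y)" using A.map_closed xy a by blast
      have gc: "g \<in> carrier (dsum A {x. x \<lless> p})" using A.rel_gens_closed gg by blast
      have "dsum_map p g = dsum_ins B {x. x \<lless> p} x (phi x a) \<ominus>\<^bsub>dsum B {x. x \<lless> p}\<^esub> dsum_ins B {x. x \<lless> p} y (snd B x y (phi x a))"
        unfolding g by (simp add: mod_hom_minus[OF A.dsum_module B.dsum_module mod_hom_dsum_map] A.dsum_ins_closed xy a b dsum_map_ins phi_nat)
      also have "\<dots> \<in> dlim_rel R B {x. x \<lless> p}"
        by (rule B.rel_gen_in_dlim_rel) (use xy a phi_closed in auto)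
      finally show "g \<in> ?P" using gc by blast
    qed
  qed
  then show ?thesis using f by blast
qed

lemma lower_map_eq:
  "lower_map p = (\<lambda>X. quot_cls (dsum B {x. x \<lless> p}) (dlim_rel R B {x. x \<lless> p}) (dsum_map p (rep X)))"
  by (intro ext) (simp add: lower_map_def B.dlim_cls_eq)

lemma mod_hom_lower_map: "mod_hom R (fst (lower R A) p) (fst (lower R B) p) (lower_map p)"
  unfolding lower_map_eq A.fst_lower B.fst_lower A.dir_lim_eq B.dir_lim_eq
  by (rule submodule_quot.mod_hom_induced[OF A.submodule_quot_dlim B.submodule_quot_dlim
        mod_hom_dsum_map dsum_map_rel])

lemma lower_map_dlim_cls:
  "f \<in> carrier (dsum A {x. x \<lless> p}) \<Longrightarrow>
   lower_map p (dlim_cls R A {x. x \<lless> p} f) = dlim_cls R B {x. x \<lless> p} (dsum_map p f)"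
  unfolding lower_map_eq A.dlim_cls_eq B.dlim_cls_eq
  by (rule submodule_quot.induced_rep_quot_cls[OF A.submodule_quot_dlim B.submodule_quot_dlim
        mod_hom_dsum_map dsum_map_rel])

lemma push_sum_dsum_map:
  assumes g: "g \<in> carrier (dsum A {x. x \<lless> p})" and sg: "A.supp {x. x \<lless> p} g \<subseteq> {x. x \<le> z}"
  shows "B.push_sum {x. x \<lless> p} z (dsum_map p g) = phi z (A.push_sum {x. x \<lless> p} z g)"
proof -
  let ?S = "A.supp {x. x \<lless> p} g"
  have fin: "finite ?S" using A.dsum_carrierD(3)[OF g] .
  have sub: "?S \<subseteq> {x. x \<lless> p}" "\<forall>x\<in>?S. x \<le> z" using sg A.supp_subset by blast+
  have Pg: "dsum_map p g \<in> carrier (dsum B {x. x \<lless> p})" using mod_hom_closed[OF mod_hom_dsum_map g] .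
  have "B.push_sum {x. x \<lless> p} z (dsum_map p g) = finsum (fst B z) (\<lambda>x. snd B x z (dsum_map p g x)) ?S"
    by (rule B.push_sum_superset[OF Pg fin supp_dsum_map[OF g] sub])
  also have "\<dots> = finsum (fst B z) (\<lambda>x. phi z (snd A x z (g x))) ?S"
  proof (rule abelian_monoid.finsum_cong'[OF B.abelian_monoid_at refl])
    show "(\<lambda>x. phi z (snd A x z (g x))) \<in> ?S \<rightarrow> carrier (fst B z)"
      using A.push_terms_closed[OF g sub] phi_closed by blast
    fix i assume i: "i \<in> ?S"
    then have "i \<lless> p" "i \<le> z" using sub by auto
    then show "snd B i z (dsum_map p g i) = phi z (snd A i z (g i))"
      using phi_nat A.dsum_carrierD(1)[OF g] by (simp add: dsum_map_def)
  qed
  also have "\<dots> = phi z (A.push_sum {x. x \<lless> p} z g)"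
    unfolding A.push_sum_def by (rule mod_hom_finsum[OF A.module_at B.module_at phi_hom fin A.push_terms_closed[OF g sub], symmetric])
  finally show ?thesis .
qed

lemma psi_zero: "x \<lless> y \<Longrightarrow> psi x y \<zero>\<^bsub>fst B x\<^esub> = \<zero>\<^bsub>fst A y\<^esub>"
  using psi_phi[of x y "\<zero>\<^bsub>fst A x\<^esub>"] phi_zero A.zero_closed_at A.map_zero way_below_imp_le by metis

lemma lower_map_kernel:
  assumes X: "X \<in> carrier (fst (lower R A) p)" and z: "lower_map p X = \<zero>\<^bsub>fst (lower R B) p\<^esub>"
  shows "X = \<zero>\<^bsub>fst (lower R A) p\<^esub>"
proof -
  let ?J = "{x. x \<lless> p}"
  define g where "g = rep X"
  have g: "g \<in> carrier (dsum A ?J)" and Xg: "X = dlim_cls R A ?J g" using A.lower_carrierD[OF X] unfolding g_def by auto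
  have Pg: "dsum_map p g \<in> carrier (dsum B ?J)" using mod_hom_closed[OF mod_hom_dsum_map g] .
  have "dsum_map p g \<in> dlim_rel R B ?J"
    using z submodule_quot.quot_cls_eq_zero_iff[OF B.submodule_quot_dlim Pg] unfolding lower_map_def g_def[symmetric] B.fst_lower B.dir_lim_eq B.dlim_cls_eq by simp
  then obtain z where zJ: "z \<lless> p" and sz: "B.supp ?J (dsum_map p g) \<subseteq> {x. x \<le> z}" and pz: "B.push_sum ?J z (dsum_map p g) = \<zero>\<^bsub>fst B z\<^esub>"
    using B.dlim_rel_iff[OF directed_way_below[OF A.cont]] by blast
  obtain z0 where z0: "z0 \<lless> p" "\<forall>x\<in>A.supp ?J g. x \<le> z0"
    using directed_finite_upper_bound[OF directed_way_below[OF A.cont] A.dsum_carrierD(3)[OF g] A.supp_subset] by auto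
  obtain z1 where z1: "z1 \<lless> p" "z \<le> z1" "z0 \<le> z1" using way_below_upper_bound[OF A.cont zJ z0(1)] by blast
  have sg1: "A.supp ?J g \<subseteq> {x. x \<le> z1}" using z0 z1 order_trans by blast
  have "B.push_sum ?J z1 (dsum_map p g) = snd B z z1 (B.push_sum ?J z (dsum_map p g))" using B.map_push_sum[OF Pg sz z1(2)] by simp
  then have "B.push_sum ?J z1 (dsum_map p g) = \<zero>\<^bsub>fst B z1\<^esub>" using pz B.map_zero[OF z1(2)] by simp
  then have pz1: "phi z1 (A.push_sum ?J z1 g) = \<zero>\<^bsub>fst B z1\<^esub>" using push_sum_dsum_map[OF g sg1] by simp
  txt \<open>\<open>\<phi>\<close> kills the image of \<open>g\<close> at \<open>z1\<close>; pushing one step further up, \<open>\<psi>\<close> undoes \<open>\<phi>\<close>.\<close>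
  obtain w where w: "z1 \<lless> w" "w \<lless> p" using way_below_interpolation[OF A.cont z1(1)] by blast
  have "A.push_sum ?J w g = snd A z1 w (A.push_sum ?J z1 g)" using A.map_push_sum[OF g sg1 way_below_imp_le[OF w(1)]] by simp
  also have "\<dots> = psi z1 w (phi z1 (A.push_sum ?J z1 g))" using psi_phi[OF w(1) A.push_sum_closed[OF g sg1]] by simp
  also have "\<dots> = \<zero>\<^bsub>fst A w\<^esub>" using pz1 psi_zero[OF w(1)] by simp
  finally have "A.push_sum ?J w g = \<zero>\<^bsub>fst A w\<^esub>" .
  moreover have "A.supp ?J g \<subseteq> {x. x \<le> w}" using sg1 way_below_imp_le[OF w(1)] order_trans by blast
  ultimately have "g \<in> dlim_rel R A ?J" using A.push_sum_zero_in_dlim_rel[OF g] w(2) by simp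
  then show ?thesis using Xg submodule_quot.quot_cls_eq_zero_iff[OF A.submodule_quot_dlim g] unfolding A.fst_lower A.dir_lim_eq A.dlim_cls_eq by simp
qed

lemma lower_map_surj:
  assumes Y: "Y \<in> carrier (fst (lower R B) p)"
  shows "\<exists>X\<in>carrier (fst (lower R A) p). lower_map p X = Y"
proof -
  let ?J = "{x. x \<lless> p}"
  define g where "g = rep Y"
  have g: "g \<in> carrier (dsum B ?J)" and Yg: "Y = dlim_cls R B ?J g" using B.lower_carrierD[OF Y] unfolding g_def by auto
  obtain z where z: "z \<lless> p" "\<forall>x\<in>B.supp ?J g. x \<le> z"
    using directed_finite_upper_bound[OF directed_way_below[OF A.cont] B.dsum_carrierD(3)[OF g] B.supp_subset] by auto
  have sg: "B.supp ?J g \<subseteq> {x. x \<le> z}" using z by blast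
  define b where "b = B.push_sum ?J z g"
  have b: "b \<in> carrier (fst B z)" unfolding b_def by (rule B.push_sum_closed[OF g sg])
  have Y2: "Y = dlim_cls R B ?J (dsum_ins B ?J z b)" using Yg B.dlim_cls_collapse[OF g _ sg] z(1) unfolding b_def by simp
  obtain w where w: "z \<lless> w" "w \<lless> p" using way_below_interpolation[OF A.cont z(1)] by blast
  define a where "a = psi z w b"
  have a: "a \<in> carrier (fst A w)" unfolding a_def by (rule psi_closed[OF w(1) b])
  have ic: "dsum_ins A ?J w a \<in> carrier (dsum A ?J)" using A.dsum_ins_closed w(2) a by simp
  have "lower_map p (dlim_cls R A ?J (dsum_ins A ?J w a)) = dlim_cls R B ?J (dsum_ins B ?J w (phi w a))"
    using lower_map_dlim_cls[OF ic] dsum_map_ins w(2) by simp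
  also have "phi w a = snd B z w b" unfolding a_def by (rule phi_psi[OF w(1) b])
  also have "dlim_cls R B ?J (dsum_ins B ?J w (snd B z w b)) = dlim_cls R B ?J (dsum_ins B ?J z b)"
    using B.dlim_cls_dsum_ins_map[of z ?J w b] z(1) w(2) way_below_imp_le[OF w(1)] b by simp
  finally have "lower_map p (dlim_cls R A ?J (dsum_ins A ?J w a)) = Y" using Y2 by simp
  moreover have "dlim_cls R A ?J (dsum_ins A ?J w a) \<in> carrier (fst (lower R A) p)" by (rule A.dlim_cls_in_lower[OF ic])
  ultimately show ?thesis by blast
qed

lemma lower_iso: "is_pm_iso R (lower R A) (lower R B) lower_map"
  unfolding is_pm_iso_def
proof (intro conjI allI impI ballI)
  fix p
  show h: "mod_hom R (fst (lower R A) p) (fst (lower R B) p) (lower_map p)" by (rule mod_hom_lower_map)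
  have inj: "inj_on (lower_map p) (carrier (fst (lower R A) p))"
    by (rule mod_hom_inj_onI[OF pers_module.module_at[OF A.pers_module_lower] pers_module.module_at[OF B.pers_module_lower] h lower_map_kernel])
  show "bij_betw (lower_map p) (carrier (fst (lower R A) p)) (carrier (fst (lower R B) p))"
    unfolding bij_betw_def using inj mod_hom_closed[OF h] lower_map_surj by blast
next
  fix p q X assume pq: "p \<le> q" and X: "X \<in> carrier (fst (lower R A) p)"
  let ?Jp = "{x. x \<lless> p}" and ?Jq = "{x. x \<lless> q}"
  define g where "g = rep X"
  have g: "g \<in> carrier (dsum A ?Jp)" using A.lower_carrierD[OF X] unfolding g_def by auto
  have eg: "A.dsum_extend p q g \<in> carrier (dsum A ?Jq)" by (rule mod_hom_closed[OF A.dsum_extend_hom[OF pq] g])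
  have Pg: "dsum_map p g \<in> carrier (dsum B ?Jp)" by (rule mod_hom_closed[OF mod_hom_dsum_map g])
  have sub: "\<And>x. x \<lless> p \<Longrightarrow> x \<lless> q" using pq way_below_le_trans by blast
  have ee: "dsum_map q (A.dsum_extend p q g) = B.dsum_extend p q (dsum_map p g)"
    by (intro ext) (simp add: dsum_map_def A.dsum_extend_def B.dsum_extend_def phi_zero sub)
  have "lower_map q (snd (lower R A) p q X) = lower_map q (dlim_cls R A ?Jq (A.dsum_extend p q g))"
    by (simp add: A.snd_lower g_def)
  also have "\<dots> = dlim_cls R B ?Jq (dsum_map q (A.dsum_extend p q g))" by (rule lower_map_dlim_cls[OF eg])
  also have "\<dots> = dlim_cls R B ?Jq (B.dsum_extend p q (dsum_map p g))" by (simp add: ee)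
  also have "\<dots> = snd (lower R B) p q (dlim_cls R B ?Jp (dsum_map p g))" by (rule B.snd_lower_dlim_cls[OF pq Pg, symmetric])
  also have "\<dots> = snd (lower R B) p q (lower_map p X)" by (simp add: lower_map_def g_def)
  finally show "lower_map q (snd (lower R A) p q X) = snd (lower R B) p q (lower_map p X)" .
qed

end

section \<open>The unit and the counit\<close>

context cont_pers_module
begin

lemma iso_up_to_way_below_upper_unit: "iso_up_to_way_below R M (upper M) (upper_unit M) (\<lambda>x y f. f y)"
proof (intro iso_up_to_way_below.intro iso_up_to_way_below_axioms.intro
    cont_pers_module_axioms pers_module_upper mod_hom_upper_unit upper_unit_natural)
  fix x y f assume "x \<lless> y" "f \<in> carrier (fst (upper M) x)"
  then show "f y \<in> carrier (fst M y)" by (simp add: upper_carrier)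
next
  fix x y a assume "x \<lless> y" "a \<in> carrier (fst M x)"
  then show "upper_unit M x a y = snd M x y a" by (simp add: upper_unit_def)
next
  fix x y f assume xy: "x \<lless> y" and f: "f \<in> carrier (fst (upper M) x)"
  show "upper_unit M y (f y) = snd (upper M) x y f"
  proof (rule ext)
    fix z show "upper_unit M y (f y) z = snd (upper M) x y f z"
    proof (cases "y \<lless> z")
      case True
      then have "x \<lless> z" using xy way_below_trans by blast
      then show ?thesis
        using f True xy way_below_imp_le[OF True] by (simp add: upper_unit_def snd_upper upper_carrier)
    qed (simp add: upper_unit_def snd_upper)
  qed
next
  fix x z y f assume "x \<lless> z" "z \<le> y" "f \<in> carrier (fst (upper M) x)"
  moreover have "x \<lless> y" using calculation way_below_le_trans by blast
  ultimately show "snd M z y (f z) = f y" by (simp add: upper_carrier)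
qed

lemma lower_counit_natural:
  assumes xy: "x \<le> y" and X: "X \<in> carrier (fst (lower R M) x)"
  shows "lower_counit R M y (snd (lower R M) x y X) = snd M x y (lower_counit R M x X)"
proof -
  define g where "g = rep X"
  have g: "g \<in> carrier (dsum M {w. w \<lless> x})" using lower_carrierD[OF X] unfolding g_def by auto
  have sgy: "supp {w. w \<lless> x} g \<subseteq> {w. w \<le> y}" using supp_way_below xy order_trans by blast
  have eg: "dsum_extend x y g \<in> carrier (dsum M {w. w \<lless> y})"
    by (rule mod_hom_closed[OF dsum_extend_hom[OF xy] g])
  have "lower_counit R M y (snd (lower R M) x y X) = lower_counit R M y (dlim_cls R M {w. w \<lless> y} (dsum_extend x y g))"
    by (simp add: snd_lower g_def)
  also have "\<dots> = push_sum {w. w \<lless> y} y (dsum_extend x y g)" by (rule lower_counit_dlim_cls[OF eg])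
  also have "\<dots> = push_sum {w. w \<lless> x} y g" by (rule push_sum_dsum_extend[OF xy g sgy])
  also have "\<dots> = snd M x y (push_sum {w. w \<lless> x} x g)" by (rule map_push_sum[OF g supp_way_below xy, symmetric])
  also have "\<dots> = snd M x y (lower_counit R M x X)" by (simp add: lower_counit_eq g_def)
  finally show ?thesis .
qed

lemma lower_ins_lower_counit:
  assumes xy: "x \<lless> y" and X: "X \<in> carrier (fst (lower R M) x)"
  shows "lower_ins x y (lower_counit R M x X) = snd (lower R M) x y X"
proof -
  define g where "g = rep X"
  have g: "g \<in> carrier (dsum M {w. w \<lless> x})" using lower_carrierD[OF X] unfolding g_def by auto
  have xy': "x \<le> y" using way_below_imp_le[OF xy] .
  have eg: "dsum_extend x y g \<in> carrier (dsum M {w. w \<lless> y})"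
    by (rule mod_hom_closed[OF dsum_extend_hom[OF xy'] g])
  have seg: "supp {w. w \<lless> y} (dsum_extend x y g) \<subseteq> {w. w \<le> x}"
    using supp_way_below by (auto simp: supp_def dsum_extend_def)
  have "snd (lower R M) x y X = dlim_cls R M {w. w \<lless> y} (dsum_extend x y g)" by (simp add: snd_lower g_def)
  also have "\<dots> = lower_ins x y (push_sum {w. w \<lless> y} x (dsum_extend x y g))"
    unfolding lower_ins_def by (rule dlim_cls_collapse[OF eg _ seg]) (use xy in simp)
  also have "push_sum {w. w \<lless> y} x (dsum_extend x y g) = push_sum {w. w \<lless> x} x g"
    by (rule push_sum_dsum_extend[OF xy' g supp_way_below])
  also have "\<dots> = lower_counit R M x X" by (simp add: lower_counit_eq g_def)
  finally show ?thesis ..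
qed

lemma lower_counit_lower_ins:
  assumes "x \<lless> y" "a \<in> carrier (fst M x)"
  shows "lower_counit R M y (lower_ins x y a) = snd M x y a"
  using lower_counit_dlim_cls[OF dsum_ins_closed] push_sum_dsum_ins[of x "{w. w \<lless> y}" y a]
    assms way_below_imp_le[OF assms(1)] by (simp add: lower_ins_def)

lemma iso_up_to_way_below_lower_counit: "iso_up_to_way_below R (lower R M) M (lower_counit R M) lower_ins"
  by (intro iso_up_to_way_below.intro iso_up_to_way_below_axioms.intro cont_pers_module_lower pers_module_axioms
      mod_hom_lower_counit lower_counit_natural lower_ins_closed lower_ins_lower_counit lower_counit_lower_ins
      snd_lower_lower_ins)

end

section \<open>Semi-continuity of the upper and lower modules\<close>

context cont_pers_module
begin

lemma upper_semicont_upper: "upper_semicont R (upper M)"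
proof -
  interpret U: iso_up_to_way_below R M "upper M" "upper_unit M" "\<lambda>x y f. f y"
    by (rule iso_up_to_way_below_upper_unit)
  have "upper_unit (upper M) p f = U.upper_map p f" if f: "f \<in> carrier (fst (upper M) p)" for p f
  proof (intro ext)
    fix x y
    have "snd M x y (f x) = f y" if "p \<lless> x" "x \<lless> y"
    proof -
      have "p \<lless> y" using that way_below_trans by blast
      then show ?thesis using f that way_below_imp_le[OF that(2)] by (simp add: upper_carrier)
    qed
    then show "upper_unit (upper M) p f x y = U.upper_map p f x y"
      by (simp add: upper_unit_def U.upper_map_def snd_upper)
  qed
  then show ?thesis
    unfolding upper_semicont_def by (rule is_pm_iso_cong[OF pers_module_upper U.upper_iso])
qed

lemma lower_semicont_lower: "lower_semicont R (lower R M)"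
proof -
  interpret E: iso_up_to_way_below R "lower R M" M "lower_counit R M" lower_ins
    by (rule iso_up_to_way_below_lower_counit)
  have "lower_counit R (lower R M) p X = E.lower_map p X" if X: "X \<in> carrier (fst (lower R (lower R M)) p)" for p X
  proof -
    let ?J = "{x. x \<lless> p}"
    define G where "G = rep X"
    have G: "G \<in> carrier (dsum (lower R M) ?J)" and XG: "X = dlim_cls R (lower R M) ?J G"
      using E.A.lower_carrierD[OF X] unfolding G_def by auto
    txt \<open>Represent \<open>X\<close> by a single element sitting at some \<open>z \<lless> p\<close>, where both maps are explicit.\<close>
    obtain z where z: "z \<lless> p" "\<forall>x\<in>E.A.supp ?J G. x \<le> z"
      using directed_finite_upper_bound[OF directed_way_below[OF cont] E.A.dsum_carrierD(3)[OF G] E.A.supp_subset]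
      by auto
    have sG: "E.A.supp ?J G \<subseteq> {x. x \<le> z}" using z by blast
    define Y where "Y = E.A.push_sum ?J z G"
    have Y: "Y \<in> carrier (fst (lower R M) z)" unfolding Y_def by (rule E.A.push_sum_closed[OF G sG])
    have ic: "dsum_ins (lower R M) ?J z Y \<in> carrier (dsum (lower R M) ?J)"
      by (rule E.A.dsum_ins_closed) (use z Y in auto)
    have X_ins: "X = dlim_cls R (lower R M) ?J (dsum_ins (lower R M) ?J z Y)"
      using XG E.A.dlim_cls_collapse[OF G _ sG] z(1) unfolding Y_def by simp
    have "lower_counit R (lower R M) p X = E.A.push_sum ?J p (dsum_ins (lower R M) ?J z Y)"
      unfolding X_ins by (rule E.A.lower_counit_dlim_cls[OF ic])
    also have "\<dots> = snd (lower R M) z p Y" by (rule E.A.push_sum_dsum_ins) (use z Y way_below_imp_le in auto)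
    also have "\<dots> = lower_ins z p (lower_counit R M z Y)" by (rule E.psi_phi[OF z(1) Y, symmetric])
    also have "\<dots> = E.lower_map p X"
      unfolding X_ins E.lower_map_dlim_cls[OF ic] E.dsum_map_ins[OF z(1)] lower_ins_def ..
    finally show ?thesis .
  qed
  then show ?thesis
    unfolding lower_semicont_def by (rule is_pm_iso_cong[OF E.A.pers_module_lower E.lower_iso])
qed

end

theorem mainTheorem3:
  fixes R :: "'k ring" and M :: "('p::order, 'k, 'm) pmod"
  assumes "continuous_poset TYPE('p)"
    and "cring R"
    and "pers_mod R M"
  shows "pm_isomorphic R (upper (upper M)) (upper M)
       \<and> pm_isomorphic R (lower R (lower R M)) (lower R M)
       \<and> pm_isomorphic R (upper (lower R M)) (upper M)
       \<and> pm_isomorphic R (lower R (upper M)) (lower R M)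
       \<and> upper_semicont R (upper M)
       \<and> lower_semicont R (lower R M)"
proof -
  interpret cont_pers_module R M by (intro cont_pers_module.intro pers_module.intro cont_pers_module_axioms.intro assms)
  interpret U: iso_up_to_way_below R M "upper M" "upper_unit M" "\<lambda>x y f. f y"
    by (rule iso_up_to_way_below_upper_unit)
  interpret E: iso_up_to_way_below R "lower R M" M "lower_counit R M" lower_ins
    by (rule iso_up_to_way_below_lower_counit)
  have "is_pm_iso R (upper M) (upper (upper M)) (upper_unit (upper M))"
    using upper_semicont_upper unfolding upper_semicont_def .
  then show ?thesis
    unfolding pm_isomorphic_def
    using is_pm_iso_inv[OF pers_module_upper] is_pm_iso_inv[OF pers_module_lower U.lower_iso]
      E.upper_iso E.lower_iso upper_semicont_upper lower_semicont_lower by blast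
qed

end
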